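(* For each fixed $k\ge3$, the probability that a uniformly random standard Young tableau with $n$ cells has the entry $k$ in row $1$, column $2$ equals \[\frac{k-1}{k!}+\frac{k-4}{3(k-3)!}\,\frac1{n^{3/2}}+O\!\left(\frac1{n^2}\right)\qquad(n\to\infty).\]
   Context: A standard Young tableau with $n$ cells is a Ferrers diagram of a partition of $n$ filled bijectively with $1,\dots,n$, entries increasing along rows and down columns; the uniform distribution is over all such tableaux of all shapes with $n$ cells. *)

theory Defs
  imports Complex_Main "HOL-Library.Landau_Symbols"
begin

text \<open>Cells are pairs (row, column), 0-indexed: row 1, column 2 of the paper is the cell (0, 1).
  A Ferrers diagram is a finite down-closed set of cells.\<close>

definition ferrers :: "(nat \<times> nat) set \<Rightarrow> bool" where
  "ferrers S \<longleftrightarrow> finite S \<and>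
     (\<forall>i j i' j'. (i, j) \<in> S \<and> i' \<le> i \<and> j' \<le> j \<longrightarrow> (i', j') \<in> S)"

text \<open>Outside its shape T is 0, so a tableau determines its shape.\<close>

definition is_syt :: "nat \<Rightarrow> (nat \<times> nat \<Rightarrow> nat) \<Rightarrow> bool" where
  "is_syt n T \<longleftrightarrow>
     (let S = {c. T c \<noteq> 0} in
        ferrers S \<and> bij_betw T S {1..n} \<and>
        (\<forall>i j. (i, Suc j) \<in> S \<longrightarrow> T (i, j) < T (i, Suc j)) \<and>
        (\<forall>i j. (Suc i, j) \<in> S \<longrightarrow> T (i, j) < T (Suc i, j)))"

definition SYT :: "nat \<Rightarrow> (nat \<times> nat \<Rightarrow> nat) set" where
  "SYT n = {T. is_syt n T}"

definition prob_entry_12 :: "nat \<Rightarrow> nat \<Rightarrow> real" where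
  "prob_entry_12 k n = real (card {T \<in> SYT n. T (0, 1) = k}) / real (card (SYT n))"

end

theory Submission
  imports Defs "HOL-Real_Asymp.Real_Asymp"
begin

text \<open>Removing the entries \<open>1, ..., k - 1\<close>, which must fill the first column, identifies the
  tableaux with entry \<open>k\<close> in cell \<open>(0, 1)\<close> with the standard fillings with \<open>n - k\<close> cells of
  skew shapes \<open>\<lambda>/\<mu>\<close>, \<open>\<mu> = (2, 1\<^sup>k\<^sup>-\<^sup>2)\<close>. The commutation relation \<open>DU = UD + I\<close> of Young's
  lattice expresses their number as \<open>\<Sum>\<^sub>j C(n - k, j) t(n - k - j) e\<^sub>j(\<mu>)\<close>, where \<open>t\<close> are the
  telephone numbers (which also count all standard Young tableaux) and \<open>e\<^sub>j(\<mu>)\<close> is the number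
  of descending chains of length \<open>j\<close> from \<open>\<mu>\<close>. The recurrence \<open>t(n) = t(n - 1) + (n - 1) t(n - 2)\<close>
  together with a stability argument yields the expansion of \<open>t(n - 1) / t(n)\<close> in powers of
  \<open>n\<^sup>-\<^sup>1\<^sup>/\<^sup>2\<close>, and multiplying out the four leading terms gives the claim.\<close>

section \<open>Ferrers diagrams\<close>

lemma ferrersD: "ferrers S \<Longrightarrow> (i, j) \<in> S \<Longrightarrow> i' \<le> i \<Longrightarrow> j' \<le> j \<Longrightarrow> (i', j') \<in> S"
  unfolding ferrers_def by blast

lemma ferrers_finite: "ferrers S \<Longrightarrow> finite S"
  unfolding ferrers_def by blast

lemma ferrersI:
  assumes "finite S" "\<And>i j i' j'. (i, j) \<in> S \<Longrightarrow> i' \<le> i \<Longrightarrow> j' \<le> j \<Longrightarrow> (i', j') \<in> S"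
  shows "ferrers S"
  unfolding ferrers_def using assms by blast

lemma ferrers_empty: "ferrers {}"
  by (rule ferrersI) auto

lemma ferrers_Un: "ferrers A \<Longrightarrow> ferrers B \<Longrightarrow> ferrers (A \<union> B)"
  by (rule ferrersI) (auto dest: ferrers_finite intro: ferrersD)

lemma ferrers_Int: "ferrers A \<Longrightarrow> ferrers B \<Longrightarrow> ferrers (A \<inter> B)"
  by (rule ferrersI) (auto dest: ferrers_finite intro: ferrersD)

definition addable :: "(nat \<times> nat) set \<Rightarrow> (nat \<times> nat) set" where
  "addable S = {c. c \<notin> S \<and> ferrers (insert c S)}"

definition removable :: "(nat \<times> nat) set \<Rightarrow> (nat \<times> nat) set" where
  "removable S = {d \<in> S. ferrers (S - {d})}"

lemma addable_iff:
  assumes S: "ferrers S"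
  shows "(i, j) \<in> addable S \<longleftrightarrow>
    (i, j) \<notin> S \<and> (0 < i \<longrightarrow> (i - 1, j) \<in> S) \<and> (0 < j \<longrightarrow> (i, j - 1) \<in> S)"
proof
  assume "(i, j) \<in> addable S"
  then have f: "ferrers (insert (i, j) S)" and "(i, j) \<notin> S"
    by (auto simp: addable_def)
  moreover have "(i - 1, j) \<in> insert (i, j) S" "(i, j - 1) \<in> insert (i, j) S"
    by (rule ferrersD[OF f, of i j]; simp)+
  ultimately show "(i, j) \<notin> S \<and> (0 < i \<longrightarrow> (i - 1, j) \<in> S) \<and> (0 < j \<longrightarrow> (i, j - 1) \<in> S)"
    by auto
next
  assume a: "(i, j) \<notin> S \<and> (0 < i \<longrightarrow> (i - 1, j) \<in> S) \<and> (0 < j \<longrightarrow> (i, j - 1) \<in> S)"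
  have "(i', j') \<in> S" if "i' < i" "j' \<le> j" for i' j'
    using a that ferrersD[OF S, of "i - 1" j i' j'] by auto
  moreover have "(i', j') \<in> S" if "i' \<le> i" "j' < j" for i' j'
    using a that ferrersD[OF S, of i "j - 1" i' j'] by auto
  ultimately have below: "(i', j') \<in> insert (i, j) S" if "i' \<le> i" "j' \<le> j" for i' j'
    using that by (cases "i' < i \<or> j' < j") auto
  have "ferrers (insert (i, j) S)"
  proof (rule ferrersI)
    fix a b a' b' assume "(a, b) \<in> insert (i, j) S" "a' \<le> a" "b' \<le> b"
    then show "(a', b') \<in> insert (i, j) S"
      using below ferrersD[OF S, of a b a' b'] by auto
  qed (use ferrers_finite[OF S] in simp)
  then show "(i, j) \<in> addable S"
    using a by (simp add: addable_def)
qed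

lemma removable_iff:
  assumes S: "ferrers S"
  shows "(i, j) \<in> removable S \<longleftrightarrow> (i, j) \<in> S \<and> (Suc i, j) \<notin> S \<and> (i, Suc j) \<notin> S"
proof
  assume "(i, j) \<in> removable S"
  then have f: "ferrers (S - {(i, j)})" and "(i, j) \<in> S"
    by (auto simp: removable_def)
  then show "(i, j) \<in> S \<and> (Suc i, j) \<notin> S \<and> (i, Suc j) \<notin> S"
    using ferrersD[OF f, of "Suc i" j i j] ferrersD[OF f, of i "Suc j" i j] by auto
next
  assume a: "(i, j) \<in> S \<and> (Suc i, j) \<notin> S \<and> (i, Suc j) \<notin> S"
  have other: "(i', j') \<noteq> (i, j)" if "(i'', j'') \<in> S" "(i'', j'') \<noteq> (i, j)" "i' \<le> i''" "j' \<le> j''"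
    for i' j' i'' j''
  proof
    assume "(i', j') = (i, j)"
    then have "Suc i \<le> i'' \<and> j \<le> j'' \<or> i \<le> i'' \<and> Suc j \<le> j''"
      using that by auto
    then show False
      using a that ferrersD[OF S, of i'' j'' "Suc i" j] ferrersD[OF S, of i'' j'' i "Suc j"] by auto
  qed
  have "ferrers (S - {(i, j)})"
  proof (intro ferrersI)
    fix a b a' b' assume "(a, b) \<in> S - {(i, j)}" "a' \<le> a" "b' \<le> b"
    then show "(a', b') \<in> S - {(i, j)}"
      using other[of a b a' b'] ferrersD[OF S, of a b a' b'] by blast
  qed (use ferrers_finite[OF S] in simp)
  then show "(i, j) \<in> removable S"
    using a by (simp add: removable_def)
qed

lemma downclosed_nat_set_eq:
  fixes A :: "nat set"
  assumes "finite A" "\<And>j j'. j \<in> A \<Longrightarrow> j' \<le> j \<Longrightarrow> j' \<in> A"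
  shows "A = {..<card A}"
proof -
  have "j \<in> A \<longleftrightarrow> j < card A" for j
  proof
    assume "j \<in> A"
    then have "{..j} \<subseteq> A" using assms(2) by auto
    from card_mono[OF assms(1) this] show "j < card A" by simp
  next
    assume j: "j < card A"
    show "j \<in> A"
    proof (rule ccontr)
      assume "j \<notin> A"
      then have "A \<subseteq> {..<j}" using assms(2) by (meson lessThan_iff not_le subsetI)
      from card_mono[OF _ this] j show False by simp
    qed
  qed
  then show ?thesis by auto
qed

definition row_length :: "(nat \<times> nat) set \<Rightarrow> nat \<Rightarrow> nat" where
  "row_length S i = card {j. (i, j) \<in> S}"

lemma mem_ferrers_iff_row_length:
  assumes S: "ferrers S"
  shows "(i, j) \<in> S \<longleftrightarrow> j < row_length S i"
proof -
  have "finite (Pair i -` S)"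
    using ferrers_finite[OF S] by (rule finite_vimageI) (simp add: inj_on_def)
  then have "{j. (i, j) \<in> S} = {..<row_length S i}"
    unfolding row_length_def
    by (intro downclosed_nat_set_eq) (auto simp: vimage_def intro: ferrersD[OF S])
  then show ?thesis by auto
qed

lemma addable_eq:
  assumes S: "ferrers S"
  shows "addable S = (\<lambda>i. (i, row_length S i)) `
    insert 0 (Suc ` {i. row_length S (Suc i) < row_length S i})"
proof (rule set_eqI)
  fix x :: "nat \<times> nat"
  obtain i j where x: "x = (i, j)" by (cases x)
  show "x \<in> addable S \<longleftrightarrow> x \<in> (\<lambda>i. (i, row_length S i)) `
    insert 0 (Suc ` {i. row_length S (Suc i) < row_length S i})"
    unfolding x addable_iff[OF S] mem_ferrers_iff_row_length[OF S] by (cases i) auto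
qed

lemma removable_eq:
  assumes S: "ferrers S"
  shows "removable S = (\<lambda>i. (i, row_length S i - 1)) ` {i. row_length S (Suc i) < row_length S i}"
proof (rule set_eqI)
  fix x :: "nat \<times> nat"
  obtain i j where x: "x = (i, j)" by (cases x)
  show "x \<in> removable S \<longleftrightarrow> x \<in> (\<lambda>i. (i, row_length S i - 1)) `
    {i. row_length S (Suc i) < row_length S i}"
    unfolding x removable_iff[OF S] mem_ferrers_iff_row_length[OF S] by auto
qed

lemma finite_row_descents:
  assumes S: "ferrers S"
  shows "finite {i. row_length S (Suc i) < row_length S i}"
proof (rule finite_subset)
  show "{i. row_length S (Suc i) < row_length S i} \<subseteq> fst ` S"
    using mem_ferrers_iff_row_length[OF S] by force
qed (use ferrers_finite[OF S] in simp)

lemma finite_addable: "ferrers S \<Longrightarrow> finite (addable S)"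
  by (simp add: addable_eq finite_row_descents)

lemma finite_removable: "ferrers S \<Longrightarrow> finite (removable S)"
  by (simp add: removable_eq finite_row_descents)

lemma card_addable:
  assumes S: "ferrers S"
  shows "card (addable S) = Suc (card (removable S))"
proof -
  define R where "R = {i. row_length S (Suc i) < row_length S i}"
  have "card (addable S) = card (insert 0 (Suc ` R))"
    unfolding addable_eq[OF S] R_def by (rule card_image) (simp add: inj_on_def)
  also have "\<dots> = Suc (card R)"
    using finite_row_descents[OF S] by (simp add: R_def card_image)
  also have "card R = card (removable S)"
    unfolding removable_eq[OF S] R_def by (rule card_image[symmetric]) (simp add: inj_on_def)
  finally show ?thesis .
qed

section \<open>Skew standard tableaux\<close>

text \<open>Standard fillings of the skew shape \<open>\<lambda>/S\<close> with \<open>m\<close> cells, where \<open>\<lambda>\<close> is \<open>S\<close> together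
  with the support of \<open>T\<close>.\<close>

definition skew_SYT :: "(nat \<times> nat) set \<Rightarrow> nat \<Rightarrow> (nat \<times> nat \<Rightarrow> nat) set" where
  "skew_SYT S m = {T. (\<forall>c\<in>S. T c = 0) \<and> ferrers (S \<union> {c. T c \<noteq> 0}) \<and>
      bij_betw T {c. T c \<noteq> 0} {1..m} \<and>
      (\<forall>i j. T (i, Suc j) \<noteq> 0 \<longrightarrow> T (i, j) < T (i, Suc j)) \<and>
      (\<forall>i j. T (Suc i, j) \<noteq> 0 \<longrightarrow> T (i, j) < T (Suc i, j))}"

lemma SYT_eq_skew_SYT: "SYT n = skew_SYT {} n"
  unfolding SYT_def skew_SYT_def is_syt_def Let_def by auto

lemma ferrers_coords_less_card:
  fixes i j :: nat
  assumes F: "ferrers F" and x: "(i, j) \<in> F"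
  shows "i < card F" "j < card F"
proof -
  have "(\<lambda>a. (a, j)) ` {..i} \<subseteq> F" "Pair i ` {..j} \<subseteq> F"
    using ferrersD[OF F x] by auto
  then have "card ((\<lambda>a. (a, j)) ` {..i}) \<le> card F" "card (Pair i ` {..j}) \<le> card F"
    using ferrers_finite[OF F] by (auto intro: card_mono)
  moreover have "card ((\<lambda>a. (a, j)) ` {..i}) = Suc i" "card (Pair i ` {..j}) = Suc j"
    by (simp_all add: card_image inj_on_def)
  ultimately show "i < card F" "j < card F"
    by simp_all
qed

lemma finite_skew_SYT:
  assumes S: "ferrers S"
  shows "finite (skew_SYT S m)"
proof -
  define B where "B = {..<card S + m} \<times> {..<card S + m}"
  have "\<forall>x. (x \<in> B \<longrightarrow> T x \<in> {..m}) \<and> (x \<notin> B \<longrightarrow> T x = 0)" if T: "T \<in> skew_SYT S m" for T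
  proof -
    have F: "ferrers (S \<union> {c. T c \<noteq> 0})" and bij: "bij_betw T {c. T c \<noteq> 0} {1..m}"
      using T by (auto simp: skew_SYT_def)
    have "card {c. T c \<noteq> 0} = m"
      using bij_betw_same_card[OF bij] by simp
    then have card: "card (S \<union> {c. T c \<noteq> 0}) \<le> card S + m"
      using card_Un_le[of S "{c. T c \<noteq> 0}"] by linarith
    have "x \<in> B" if "T x \<noteq> 0" for x
      using that ferrers_coords_less_card[OF F, of "fst x" "snd x"] card
      by (auto simp: B_def mem_Times_iff)
    moreover have "T x \<in> {..m}" for x
    proof (cases "T x = 0")
      case False
      then have "T x \<in> {1..m}"
        using bij_betwE[OF bij] by blast
      then show ?thesis by simp
    qed simp
    ultimately show ?thesis by blast
  qed
  then have "skew_SYT S m \<subseteq> {T. \<forall>x. (x \<in> B \<longrightarrow> T x \<in> {..m}) \<and> (x \<notin> B \<longrightarrow> T x = 0)}"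
    by blast
  moreover have "finite {T. \<forall>x. (x \<in> B \<longrightarrow> T x \<in> {..m}) \<and> (x \<notin> B \<longrightarrow> T x = (0::nat))}"
    by (rule finite_set_of_finite_funs) (simp_all add: B_def)
  ultimately show ?thesis
    by (rule finite_subset)
qed

definition insert_min :: "nat \<times> nat \<Rightarrow> (nat \<times> nat \<Rightarrow> nat) \<Rightarrow> nat \<times> nat \<Rightarrow> nat" where
  "insert_min c T = (\<lambda>x. if x = c then 1 else if T x = 0 then 0 else Suc (T x))"

lemma insert_min_eq_1_iff: "insert_min c T x = 1 \<longleftrightarrow> x = c"
  by (simp add: insert_min_def)

lemma insert_min_inverse: "T c = 0 \<Longrightarrow> (\<lambda>x. insert_min c T x - 1) = T"
  by (auto simp: insert_min_def)

lemma bij_betw_insert_min_iff: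
  assumes "c \<notin> D" "\<forall>x\<in>D. T x \<noteq> 0"
  shows "bij_betw (insert_min c T) (insert c D) {1..Suc m} \<longleftrightarrow> bij_betw T D {1..m}"
proof -
  have img: "{2..Suc m} = Suc ` {1..m}"
    by (simp add: image_Suc_atLeastAtMost)
  have "{1..Suc m} = {2..Suc m} \<union> {insert_min c T c}"
    by (auto simp: insert_min_def)
  then have "bij_betw (insert_min c T) (insert c D) {1..Suc m} \<longleftrightarrow>
      bij_betw (insert_min c T) (D \<union> {c}) ({2..Suc m} \<union> {insert_min c T c})"
    by simp
  also have "\<dots> \<longleftrightarrow> bij_betw (insert_min c T) D {2..Suc m}"
    using assms(1) by (subst notIn_Un_bij_betw3[symmetric]) (auto simp: insert_min_def)
  also have "\<dots> \<longleftrightarrow> bij_betw (Suc \<circ> T) D (Suc ` {1..m})"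
    unfolding img using assms by (intro bij_betw_cong) (auto simp: insert_min_def)
  also have "\<dots> \<longleftrightarrow> bij_betw T D {1..m}"
  proof -
    have "inj_on (Suc \<circ> T) D \<longleftrightarrow> inj_on T D"
      by (simp add: inj_on_def)
    moreover have "(Suc \<circ> T) ` D = Suc ` {1..m} \<longleftrightarrow> T ` D = {1..m}"
      by (simp only: image_comp[symmetric] inj_image_eq_iff[OF inj_Suc])
    ultimately show ?thesis
      by (simp only: bij_betw_def)
  qed
  finally show ?thesis .
qed

lemma insert_min_mem_skew_SYT_iff:
  assumes S: "ferrers S" and c: "c \<in> addable S" and Tc: "T c = 0"
  shows "insert_min c T \<in> skew_SYT S (Suc m) \<longleftrightarrow> T \<in> skew_SYT (insert c S) m"
proof (cases "\<forall>x\<in>S. T x = 0")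
  case False
  then obtain x where x: "x \<in> S" "T x \<noteq> 0"
    by blast
  moreover have "x \<noteq> c"
    using c x by (auto simp: addable_def)
  ultimately have "(\<forall>y\<in>S. insert_min c T y = 0) = False" "(\<forall>y\<in>insert c S. T y = 0) = False"
    using x by (auto simp: insert_min_def intro!: bexI[of _ x])
  then show ?thesis
    by (simp only: skew_SYT_def mem_Collect_eq simp_thms)
next
  case zero: True
  let ?U = "insert_min c T"
  have supp: "{x. ?U x \<noteq> 0} = insert c {x. T x \<noteq> 0}"
    by (auto simp: insert_min_def)
  have bij: "bij_betw ?U (insert c {x. T x \<noteq> 0}) {1..Suc m} \<longleftrightarrow> bij_betw T {x. T x \<noteq> 0} {1..m}"
    using Tc by (intro bij_betw_insert_min_iff) auto
  have less: "(?U y \<noteq> 0 \<longrightarrow> ?U x < ?U y) \<longleftrightarrow> (T y \<noteq> 0 \<longrightarrow> T x < T y)"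
    if "y = c \<Longrightarrow> x \<in> S" "x \<noteq> y" for x y
    using that zero Tc by (auto simp: insert_min_def)
  have "(i, j) \<in> S" if "(i, Suc j) = c \<or> (Suc i, j) = c" for i j
    using that c addable_iff[OF S] by auto
  then have rows_cols: "(\<forall>i j. ?U (i, Suc j) \<noteq> 0 \<longrightarrow> ?U (i, j) < ?U (i, Suc j)) \<longleftrightarrow>
        (\<forall>i j. T (i, Suc j) \<noteq> 0 \<longrightarrow> T (i, j) < T (i, Suc j))"
      "(\<forall>i j. ?U (Suc i, j) \<noteq> 0 \<longrightarrow> ?U (i, j) < ?U (Suc i, j)) \<longleftrightarrow>
        (\<forall>i j. T (Suc i, j) \<noteq> 0 \<longrightarrow> T (i, j) < T (Suc i, j))"
    using less by simp_all
  have U_zero: "(\<forall>x\<in>S. ?U x = 0) = True"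
    using zero c by (auto simp: insert_min_def addable_def)
  have T_zero: "(\<forall>x\<in>insert c S. T x = 0) = True"
    using zero Tc by simp
  have shape: "S \<union> insert c {x. T x \<noteq> 0} = insert c S \<union> {x. T x \<noteq> 0}"
    by simp
  show ?thesis
    unfolding skew_SYT_def mem_Collect_eq supp bij rows_cols shape U_zero T_zero by (rule refl)
qed

lemma skew_SYT_Suc_eq_insert_min:
  assumes S: "ferrers S" and U: "U \<in> skew_SYT S (Suc m)"
  shows "\<exists>c\<in>addable S. U = insert_min c (\<lambda>x. U x - 1)"
proof -
  have zero: "\<forall>x\<in>S. U x = 0" and F: "ferrers (S \<union> {x. U x \<noteq> 0})"
    and bij: "bij_betw U {x. U x \<noteq> 0} {1..Suc m}"
    and row: "\<And>i j. U (i, Suc j) \<noteq> 0 \<Longrightarrow> U (i, j) < U (i, Suc j)"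
    and col: "\<And>i j. U (Suc i, j) \<noteq> 0 \<Longrightarrow> U (i, j) < U (Suc i, j)"
    using U by (auto simp: skew_SYT_def)
  have "1 \<in> U ` {x. U x \<noteq> 0}"
    using bij by (simp add: bij_betw_def)
  then obtain c where Uc: "U c = 1"
    by auto
  have one: "U x = 1 \<longleftrightarrow> x = c" for x
    using inj_onD[OF bij_betw_imp_inj_on[OF bij], of x c] Uc by auto
  obtain i j where cij: "c = (i, j)" by (cases c)
  have "(i', j') \<in> S" if "(i', j') \<in> S \<union> {x. U x \<noteq> 0}" "U (i', j') < U c" for i' j'
    using that Uc by auto
  then have "c \<in> addable S"
    using ferrersD[OF F, of i j "i - 1" j] ferrersD[OF F, of i j i "j - 1"]
      row[of i "j - 1"] col[of "i - 1" j] Uc zero cij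
    by (auto simp: addable_iff[OF S])
  moreover have "U x = insert_min c (\<lambda>x. U x - 1) x" for x
    using one[of x] Uc by (auto simp: insert_min_def)
  ultimately show ?thesis by blast
qed

lemma bij_betw_insert_min:
  assumes S: "ferrers S"
  shows "bij_betw (\<lambda>(c, T). insert_min c T) (SIGMA c:addable S. skew_SYT (insert c S) m) (skew_SYT S (Suc m))"
proof -
  have zero: "T c = 0" if "T \<in> skew_SYT (insert c S) m" for T c
    using that by (simp add: skew_SYT_def)
  have "inj_on (\<lambda>(c, T). insert_min c T) (SIGMA c:addable S. skew_SYT (insert c S) m)"
  proof (rule inj_onI, clarify)
    fix c T c' T'
    assume "T \<in> skew_SYT (insert c S) m" "T' \<in> skew_SYT (insert c' S) m"
      and eq: "insert_min c T = insert_min c' T'"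
    then have "T c = 0" "T' c' = 0"
      by (auto simp: zero)
    moreover have "c = c'"
      using fun_cong[OF eq, of c] by (metis insert_min_eq_1_iff)
    ultimately show "c = c' \<and> T = T'"
      using eq insert_min_inverse by metis
  qed
  moreover have "(\<lambda>(c, T). insert_min c T) ` (SIGMA c:addable S. skew_SYT (insert c S) m) = skew_SYT S (Suc m)"
  proof
    show "(\<lambda>(c, T). insert_min c T) ` (SIGMA c:addable S. skew_SYT (insert c S) m) \<subseteq> skew_SYT S (Suc m)"
    proof (rule image_subsetI, clarify)
      fix c T assume "c \<in> addable S" "T \<in> skew_SYT (insert c S) m"
      then show "insert_min c T \<in> skew_SYT S (Suc m)"
        using insert_min_mem_skew_SYT_iff[OF S] zero by blast
    qed
  next
    show "skew_SYT S (Suc m) \<subseteq> (\<lambda>(c, T). insert_min c T) ` (SIGMA c:addable S. skew_SYT (insert c S) m)"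
    proof
      fix U assume U: "U \<in> skew_SYT S (Suc m)"
      then obtain c where c: "c \<in> addable S" and U_eq: "U = insert_min c (\<lambda>x. U x - 1)"
        using skew_SYT_Suc_eq_insert_min[OF S] by blast
      have "(\<lambda>x. U x - 1) \<in> skew_SYT (insert c S) m"
        using U c U_eq insert_min_mem_skew_SYT_iff[OF S c, of "\<lambda>x. U x - 1" m]
        by (metis diff_self_eq_0 insert_min_eq_1_iff)
      with c have "(c, \<lambda>x. U x - 1) \<in> (SIGMA c:addable S. skew_SYT (insert c S) m)"
        by simp
      then show "U \<in> (\<lambda>(c, T). insert_min c T) ` (SIGMA c:addable S. skew_SYT (insert c S) m)"
        by (rule rev_image_eqI) (use U_eq in simp)
    qed
  qed
  ultimately show ?thesis
    by (simp add: bij_betw_def)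
qed

lemma card_skew_SYT_Suc:
  assumes S: "ferrers S"
  shows "card {T \<in> skew_SYT S (Suc m). P T} =
    (\<Sum>c\<in>addable S. card {T \<in> skew_SYT (insert c S) m. P (insert_min c T)})"
proof -
  have bij: "bij_betw (\<lambda>(c, T). insert_min c T)
      {x \<in> (SIGMA c:addable S. skew_SYT (insert c S) m). P (case x of (c, T) \<Rightarrow> insert_min c T)}
      {T \<in> skew_SYT S (Suc m). P T}"
    by (rule bij_betw_Collect[OF bij_betw_insert_min[OF S]]) simp
  have "{x \<in> (SIGMA c:addable S. skew_SYT (insert c S) m). P (case x of (c, T) \<Rightarrow> insert_min c T)} =
      (SIGMA c:addable S. {T \<in> skew_SYT (insert c S) m. P (insert_min c T)})"
    by auto
  then have "card {T \<in> skew_SYT S (Suc m). P T} =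
      card (SIGMA c:addable S. {T \<in> skew_SYT (insert c S) m. P (insert_min c T)})"
    using bij_betw_same_card[OF bij] by simp
  also have "\<dots> = (\<Sum>c\<in>addable S. card {T \<in> skew_SYT (insert c S) m. P (insert_min c T)})"
    using finite_addable[OF S] finite_skew_SYT by (intro card_SigmaI) (auto simp: addable_def)
  finally show ?thesis .
qed

section \<open>Up and down paths in Young's lattice\<close>

fun up_paths :: "nat \<Rightarrow> (nat \<times> nat) set \<Rightarrow> nat" where
  "up_paths 0 S = 1"
| "up_paths (Suc m) S = (\<Sum>c\<in>addable S. up_paths m (insert c S))"

fun down_paths :: "nat \<Rightarrow> (nat \<times> nat) set \<Rightarrow> nat" where
  "down_paths 0 S = 1"
| "down_paths (Suc j) S = (\<Sum>d\<in>removable S. down_paths j (S - {d}))"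

lemma skew_SYT_0: "skew_SYT S 0 = {\<lambda>_. 0}" if "ferrers S"
  using that by (auto simp: skew_SYT_def bij_betw_def)

lemma card_skew_SYT_eq_up_paths: "ferrers S \<Longrightarrow> card (skew_SYT S m) = up_paths m S"
proof (induction m arbitrary: S)
  case 0
  then show ?case by (simp add: skew_SYT_0)
next
  case (Suc m)
  have "card (skew_SYT S (Suc m)) = (\<Sum>c\<in>addable S. card (skew_SYT (insert c S) m))"
    using card_skew_SYT_Suc[OF Suc.prems, of m "\<lambda>_. True"] by simp
  also have "\<dots> = (\<Sum>c\<in>addable S. up_paths m (insert c S))"
    by (rule sum.cong) (auto simp: addable_def intro: Suc.IH)
  finally show ?case by simp
qed

lemma addable_removable_commute:
  assumes S: "ferrers S" and "c \<noteq> d"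
  shows "c \<in> addable S \<and> d \<in> removable (insert c S) \<longleftrightarrow> d \<in> removable S \<and> c \<in> addable (S - {d})"
proof
  assume "c \<in> addable S \<and> d \<in> removable (insert c S)"
  then have c: "c \<notin> S" "ferrers (insert c S)" and d: "d \<in> S" "ferrers (insert c S - {d})"
    using \<open>c \<noteq> d\<close> by (auto simp: addable_def removable_def)
  have "S - {d} = S \<inter> (insert c S - {d})" and "insert c (S - {d}) = insert c S - {d}"
    using c \<open>c \<noteq> d\<close> by auto
  then show "d \<in> removable S \<and> c \<in> addable (S - {d})"
    using ferrers_Int[OF S d(2)] c d by (auto simp: addable_def removable_def)
next
  assume "d \<in> removable S \<and> c \<in> addable (S - {d})"
  then have d: "d \<in> S" "ferrers (S - {d})" and c: "c \<notin> S" "ferrers (insert c (S - {d}))"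
    using \<open>c \<noteq> d\<close> by (auto simp: addable_def removable_def)
  have "insert c S = insert c (S - {d}) \<union> S" and "insert c S - {d} = insert c (S - {d})"
    using d \<open>c \<noteq> d\<close> by auto
  then show "c \<in> addable S \<and> d \<in> removable (insert c S)"
    using ferrers_Un[OF c(2) S] c d by (auto simp: addable_def removable_def)
qed

lemma sum_addable_removable_swap:
  assumes S: "ferrers S"
  shows "(\<Sum>c\<in>addable S. \<Sum>d\<in>removable (insert c S) - {c}. f (insert c S - {d})) =
    (\<Sum>d\<in>removable S. \<Sum>c\<in>addable (S - {d}) - {d}. f (insert c (S - {d})))"
proof -
  define P where "P = (SIGMA d:removable S. addable (S - {d}) - {d})"
  have swap: "(SIGMA c:addable S. removable (insert c S) - {c}) = prod.swap ` P"
  proof (rule set_eqI)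
    fix p :: "(nat \<times> nat) \<times> nat \<times> nat"
    obtain c d where p: "p = (c, d)" by (cases p)
    show "p \<in> (SIGMA c:addable S. removable (insert c S) - {c}) \<longleftrightarrow> p \<in> prod.swap ` P"
      unfolding p pair_in_swap_image P_def mem_Sigma_iff
      using addable_removable_commute[OF S, of c d] by blast
  qed
  have "(\<Sum>c\<in>addable S. \<Sum>d\<in>removable (insert c S) - {c}. f (insert c S - {d})) =
      (\<Sum>(c, d)\<in>prod.swap ` P. f (insert c S - {d}))"
    unfolding swap[symmetric] using finite_addable[OF S] finite_removable
    by (intro sum.Sigma) (auto simp: addable_def)
  also have "\<dots> = (\<Sum>(d, c)\<in>P. f (insert c S - {d}))"
    by (simp add: sum.reindex case_prod_unfold)
  also have "\<dots> = (\<Sum>(d, c)\<in>P. f (insert c (S - {d})))"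
  proof (rule sum.cong)
    fix p assume "p \<in> P"
    then obtain d c where "p = (d, c)" "c \<noteq> d"
      by (auto simp: P_def)
    then show "(case p of (d, c) \<Rightarrow> f (insert c S - {d})) = (case p of (d, c) \<Rightarrow> f (insert c (S - {d})))"
      by (simp add: insert_Diff_if)
  qed simp
  also have "\<dots> = (\<Sum>d\<in>removable S. \<Sum>c\<in>addable (S - {d}) - {d}. f (insert c (S - {d})))"
    unfolding P_def using finite_removable[OF S] finite_addable
    by (intro sum.Sigma[symmetric]) (auto simp: removable_def)
  finally show ?thesis .
qed

lemma sum_removable_insert:
  assumes S: "ferrers S" and c: "c \<in> addable S"
  shows "(\<Sum>d\<in>removable (insert c S). f (insert c S - {d})) =
    f S + (\<Sum>d\<in>removable (insert c S) - {c}. f (insert c S - {d}))"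
proof -
  have "c \<notin> S" "ferrers (insert c S)"
    using c by (auto simp: addable_def)
  then have "c \<in> removable (insert c S)" and "insert c S - {c} = S"
    using S by (auto simp: removable_def)
  then show ?thesis
    using sum.remove[OF finite_removable[OF \<open>ferrers (insert c S)\<close>], of c "\<lambda>d. f (insert c S - {d})"]
    by simp
qed

lemma sum_addable_remove:
  assumes S: "ferrers S" and d: "d \<in> removable S"
  shows "(\<Sum>c\<in>addable (S - {d}). f (insert c (S - {d}))) =
    f S + (\<Sum>c\<in>addable (S - {d}) - {d}. f (insert c (S - {d})))"
proof -
  have "d \<in> S" "ferrers (S - {d})"
    using d by (auto simp: removable_def)
  then have "d \<in> addable (S - {d})" and "insert d (S - {d}) = S"
    using S by (auto simp: addable_def insert_absorb)
  then show ?thesis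
    using sum.remove[OF finite_addable[OF \<open>ferrers (S - {d})\<close>], of d "\<lambda>c. f (insert c (S - {d}))"]
    by simp
qed

text \<open>The commutation relation \<open>DU = UD + I\<close> of Young's lattice.\<close>

lemma sum_down_paths_addable:
  "ferrers S \<Longrightarrow> (\<Sum>c\<in>addable S. down_paths j (insert c S)) =
    down_paths (Suc j) S + down_paths j S + j * down_paths (j - 1) S"
proof (induction j arbitrary: S)
  case 0
  then show ?case
    using card_addable[OF 0] by simp
next
  case (Suc j)
  note S = Suc.prems
  have IH: "(\<Sum>c\<in>addable (S - {d}). down_paths j (insert c (S - {d}))) =
      down_paths (Suc j) (S - {d}) + down_paths j (S - {d}) + j * down_paths (j - 1) (S - {d})"
    if "d \<in> removable S" for d
    using that by (intro Suc.IH) (auto simp: removable_def)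
  have down_Suc: "(\<Sum>d\<in>removable S. j * down_paths (j - 1) (S - {d})) = j * down_paths j S"
    by (cases j) (simp_all add: sum_distrib_left)
  have "(\<Sum>c\<in>addable S. down_paths (Suc j) (insert c S)) =
      card (addable S) * down_paths j S +
      (\<Sum>c\<in>addable S. \<Sum>d\<in>removable (insert c S) - {c}. down_paths j (insert c S - {d}))"
    using sum_removable_insert[OF S, where f = "down_paths j"] by (simp add: sum.distrib)
  also have "\<dots> = down_paths j S + (card (removable S) * down_paths j S +
      (\<Sum>d\<in>removable S. \<Sum>c\<in>addable (S - {d}) - {d}. down_paths j (insert c (S - {d}))))"
    by (simp add: card_addable[OF S] sum_addable_removable_swap[OF S])
  also have "\<dots> = down_paths j S +
      (\<Sum>d\<in>removable S. \<Sum>c\<in>addable (S - {d}). down_paths j (insert c (S - {d})))"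
    using sum_addable_remove[OF S, where f = "down_paths j"] by (simp add: sum.distrib)
  also have "\<dots> = down_paths j S + (\<Sum>d\<in>removable S.
      down_paths (Suc j) (S - {d}) + down_paths j (S - {d}) + j * down_paths (j - 1) (S - {d}))"
    using IH by simp
  also have "\<dots> = down_paths (Suc (Suc j)) S + down_paths (Suc j) S + Suc j * down_paths j S"
    using down_Suc by (simp add: sum.distrib)
  finally show ?case
    by simp
qed

text \<open>The telephone numbers, counting the involutions of an \<open>n\<close>-set.\<close>

fun telephone :: "nat \<Rightarrow> nat" where
  "telephone 0 = 1"
| "telephone (Suc 0) = 1"
| "telephone (Suc (Suc n)) = telephone (Suc n) + Suc n * telephone n"

lemma telephone_pos: "0 < telephone n"
  by (induction n rule: telephone.induct) auto

definition up_down_coeff :: "nat \<Rightarrow> nat \<Rightarrow> nat" where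
  "up_down_coeff m j = (m choose j) * telephone (m - j)"

lemma up_down_coeff_eq_0: "m < j \<Longrightarrow> up_down_coeff m j = 0"
  by (simp add: up_down_coeff_def)

lemma up_down_coeff_Suc_0: "up_down_coeff (Suc m) 0 = up_down_coeff m 0 + up_down_coeff m 1"
  by (cases m) (simp_all add: up_down_coeff_def)

lemma up_down_coeff_Suc_Suc:
  "up_down_coeff (Suc m) (Suc j) =
    up_down_coeff m j + up_down_coeff m (Suc j) + (j + 2) * up_down_coeff m (Suc (Suc j))"
proof -
  have "(m choose Suc j) * telephone (m - j) = (m choose Suc j) * telephone (m - Suc j) +
      (j + 2) * ((m choose Suc (Suc j)) * telephone (m - Suc (Suc j)))"
  proof (cases "Suc (Suc j) \<le> m")
    case True
    define t where "t = m - Suc (Suc j)"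
    have t: "m - j = Suc (Suc t)" "m - Suc j = Suc t"
      using True by (simp_all add: t_def)
    have "Suc (Suc j) * (m choose Suc (Suc j)) = Suc t * (m choose Suc j)"
      using binomial_absorption[of "Suc j" m] binomial_absorb_comp[of m "Suc j"] t(2) by simp
    then show ?thesis
      unfolding t t_def[symmetric] by (simp add: algebra_simps)
  next
    case False
    then have "m choose Suc (Suc j) = 0" and "m - j \<le> 1"
      by simp_all
    then show ?thesis
      by (cases "m - j") simp_all
  qed
  then show ?thesis
    by (simp add: up_down_coeff_def algebra_simps)
qed

lemma sum_up_down_coeff_shift:
  fixes B :: "nat \<Rightarrow> nat"
  shows "(\<Sum>j<m + 2. up_down_coeff m j * (B (Suc j) + B j + j * B (j - 1))) =
    (\<Sum>j<Suc m + 2. up_down_coeff (Suc m) j * B j)"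
proof -
  let ?e = "up_down_coeff m"
  have m2: "m + 2 = Suc (m + 1)"
    by simp
  have shift0: "(\<Sum>j<m + 2. ?e j * B j) = ?e 0 * B 0 + (\<Sum>j<m + 2. ?e (Suc j) * B (Suc j))"
  proof -
    have "(\<Sum>j<m + 2. ?e j * B j) = ?e 0 * B 0 + (\<Sum>j<m + 1. ?e (Suc j) * B (Suc j))"
      unfolding m2 sum.lessThan_Suc_shift by simp
    also have "(\<Sum>j<m + 1. ?e (Suc j) * B (Suc j)) = (\<Sum>j<m + 2. ?e (Suc j) * B (Suc j))"
      by (simp add: up_down_coeff_eq_0)
    finally show ?thesis .
  qed
  have shift1: "(\<Sum>j<m + 2. ?e j * j * B (j - 1)) =
      ?e 1 * B 0 + (\<Sum>j<m + 2. (j + 2) * ?e (Suc (Suc j)) * B (Suc j))"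
  proof -
    have "(\<Sum>j<m + 2. ?e j * j * B (j - 1)) = (\<Sum>j<m + 1. ?e (Suc j) * Suc j * B j)"
      unfolding m2 sum.lessThan_Suc_shift by simp
    also have "\<dots> = ?e 1 * B 0 + (\<Sum>j<m. ?e (Suc (Suc j)) * Suc (Suc j) * B (Suc j))"
      unfolding Suc_eq_plus1[symmetric] sum.lessThan_Suc_shift by simp
    also have "(\<Sum>j<m. ?e (Suc (Suc j)) * Suc (Suc j) * B (Suc j)) =
        (\<Sum>j<m + 2. (j + 2) * ?e (Suc (Suc j)) * B (Suc j))"
      by (simp add: up_down_coeff_eq_0 mult_ac)
    finally show ?thesis .
  qed
  have "(\<Sum>j<m + 2. ?e j * (B (Suc j) + B j + j * B (j - 1))) =
      (\<Sum>j<m + 2. ?e j * B (Suc j)) + (\<Sum>j<m + 2. ?e j * B j) + (\<Sum>j<m + 2. ?e j * j * B (j - 1))"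
    by (simp add: sum.distrib algebra_simps)
  also have "\<dots> = (?e 0 + ?e 1) * B 0 +
      (\<Sum>j<m + 2. (?e j + ?e (Suc j) + (j + 2) * ?e (Suc (Suc j))) * B (Suc j))"
    unfolding shift0 shift1 by (simp add: sum.distrib algebra_simps)
  also have "\<dots> = up_down_coeff (Suc m) 0 * B 0 + (\<Sum>j<m + 2. up_down_coeff (Suc m) (Suc j) * B (Suc j))"
    by (simp add: up_down_coeff_Suc_0 up_down_coeff_Suc_Suc)
  also have "\<dots> = (\<Sum>j<Suc m + 2. up_down_coeff (Suc m) j * B j)"
    unfolding add_Suc sum.lessThan_Suc_shift by simp
  finally show ?thesis .
qed

lemma up_paths_eq_sum_down_paths:
  "ferrers S \<Longrightarrow> up_paths m S = (\<Sum>j<m + 2. up_down_coeff m j * down_paths j S)"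
proof (induction m arbitrary: S)
  case 0
  then show ?case
    by (simp add: up_down_coeff_def numeral_2_eq_2)
next
  case (Suc m)
  have "up_paths (Suc m) S = (\<Sum>c\<in>addable S. \<Sum>j<m + 2. up_down_coeff m j * down_paths j (insert c S))"
    using Suc by (auto simp: addable_def intro!: sum.cong)
  also have "\<dots> = (\<Sum>j<m + 2. up_down_coeff m j * (\<Sum>c\<in>addable S. down_paths j (insert c S)))"
    by (subst sum.swap) (simp add: sum_distrib_left)
  also have "\<dots> = (\<Sum>j<m + 2. up_down_coeff m j *
      (down_paths (Suc j) S + down_paths j S + j * down_paths (j - 1) S))"
    using sum_down_paths_addable[OF Suc.prems] by simp
  also have "\<dots> = (\<Sum>j<Suc m + 2. up_down_coeff (Suc m) j * down_paths j S)"
    by (rule sum_up_down_coeff_shift)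
  finally show ?case .
qed

lemma card_SYT: "card (SYT n) = telephone n"
proof -
  have "card (SYT n) = (\<Sum>j<n + 2. up_down_coeff n j * down_paths j {})"
    unfolding SYT_eq_skew_SYT card_skew_SYT_eq_up_paths[OF ferrers_empty]
    by (rule up_paths_eq_sum_down_paths[OF ferrers_empty])
  also have "\<dots> = (\<Sum>j\<in>{0}. up_down_coeff n j * down_paths j {})"
    by (rule sum.mono_neutral_right) (auto simp: removable_def gr0_conv_Suc)
  finally show ?thesis
    by (simp add: up_down_coeff_def)
qed

section \<open>Tableaux with a given entry in cell \<open>(0, 1)\<close>\<close>

definition column :: "nat \<Rightarrow> (nat \<times> nat) set" where
  "column a = {(i, 0) | i. i < a}"

text \<open>\<open>hook a\<close> is the shape \<open>(2, 1\<^sup>a\<^sup>-\<^sup>1)\<close>.\<close>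

definition hook :: "nat \<Rightarrow> (nat \<times> nat) set" where
  "hook a = insert (0, 1) (column a)"

lemma mem_column_iff: "(i, j) \<in> column a \<longleftrightarrow> j = 0 \<and> i < a"
  by (auto simp: column_def)

lemma mem_hook_iff: "(i, j) \<in> hook a \<longleftrightarrow> (i = 0 \<and> j = 1) \<or> (j = 0 \<and> i < a)"
  by (auto simp: hook_def column_def)

lemma ferrers_column: "ferrers (column a)"
proof (rule ferrersI)
  have "column a = (\<lambda>i. (i, 0)) ` {..<a}"
    by (auto simp: column_def)
  then show "finite (column a)"
    by simp
qed (auto simp: mem_column_iff)

lemma ferrers_hook: "1 \<le> a \<Longrightarrow> ferrers (hook a)"
proof (rule ferrersI)
  show "finite (hook a)"
    using ferrers_finite[OF ferrers_column] by (simp add: hook_def)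
qed (auto simp: mem_hook_iff)

lemma addable_empty: "addable {} = {(0, 0)}"
  by (auto simp: addable_iff[OF ferrers_empty])

lemma addable_column:
  assumes "1 \<le> a"
  shows "addable (column a) = {(a, 0), (0, 1)}"
proof (rule set_eqI)
  fix x :: "nat \<times> nat"
  obtain i j where x: "x = (i, j)" by (cases x)
  show "x \<in> addable (column a) \<longleftrightarrow> x \<in> {(a, 0), (0, 1)}"
    unfolding x addable_iff[OF ferrers_column] mem_column_iff using assms by (cases j) auto
qed

lemma removable_column: "removable (column a) = (if a = 0 then {} else {(a - 1, 0)})"
  by (auto simp: removable_iff[OF ferrers_column] mem_column_iff)

lemma removable_hook:
  assumes "1 \<le> a"
  shows "removable (hook a) = (if a = 1 then {(0, 1)} else {(0, 1), (a - 1, 0)})"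
proof (rule set_eqI)
  fix x :: "nat \<times> nat"
  obtain i j where x: "x = (i, j)" by (cases x)
  show "x \<in> removable (hook a) \<longleftrightarrow> x \<in> (if a = 1 then {(0, 1)} else {(0, 1), (a - 1, 0)})"
    unfolding x removable_iff[OF ferrers_hook[OF assms]] mem_hook_iff using assms by auto
qed

lemma insert_column: "insert (a, 0) (column a) = column (Suc a)"
  by (auto simp: column_def)

lemma card_skew_column_entry_01_1:
  assumes a: "1 \<le> a"
  shows "card {T \<in> skew_SYT (column a) (Suc m). T (0, 1) = 1} = card (skew_SYT (hook a) m)"
proof -
  have "card {T \<in> skew_SYT (column a) (Suc m). T (0, 1) = 1} =
      card {T \<in> skew_SYT (insert (a, 0) (column a)) m. insert_min (a, 0) T (0, 1) = 1} +
      card {T \<in> skew_SYT (insert (0, 1) (column a)) m. insert_min (0, 1) T (0, 1) = 1}"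
    using card_skew_SYT_Suc[OF ferrers_column, of a m "\<lambda>T. T (0, 1) = 1"] a
    by (simp add: addable_column)
  also have "{T \<in> skew_SYT (insert (a, 0) (column a)) m. insert_min (a, 0) T (0, 1) = 1} = {}"
    using a by (auto simp: insert_min_def)
  also have "{T \<in> skew_SYT (insert (0, 1) (column a)) m. insert_min (0, 1) T (0, 1) = 1} =
      skew_SYT (hook a) m"
    by (auto simp: insert_min_def hook_def)
  finally show ?thesis
    by simp
qed

lemma card_skew_column_entry_01_Suc:
  assumes a: "1 \<le> a" and t: "1 \<le> t"
  shows "card {T \<in> skew_SYT (column a) (Suc m). T (0, 1) = Suc t} =
    card {T \<in> skew_SYT (column (Suc a)) m. T (0, 1) = t}"
proof -
  have "card {T \<in> skew_SYT (column a) (Suc m). T (0, 1) = Suc t} =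
      card {T \<in> skew_SYT (insert (a, 0) (column a)) m. insert_min (a, 0) T (0, 1) = Suc t} +
      card {T \<in> skew_SYT (insert (0, 1) (column a)) m. insert_min (0, 1) T (0, 1) = Suc t}"
    using card_skew_SYT_Suc[OF ferrers_column, of a m "\<lambda>T. T (0, 1) = Suc t"] a
    by (simp add: addable_column)
  also have "{T \<in> skew_SYT (insert (a, 0) (column a)) m. insert_min (a, 0) T (0, 1) = Suc t} =
      {T \<in> skew_SYT (column (Suc a)) m. T (0, 1) = t}"
    using t a unfolding insert_column by (auto simp: insert_min_def)
  also have "{T \<in> skew_SYT (insert (0, 1) (column a)) m. insert_min (0, 1) T (0, 1) = Suc t} = {}"
    using t by (auto simp: insert_min_def)
  finally show ?thesis
    by simp
qed

lemma card_skew_column_entry_01: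
  "1 \<le> a \<Longrightarrow> card {T \<in> skew_SYT (column a) (m + Suc t). T (0, 1) = Suc t} = card (skew_SYT (hook (a + t)) m)"
proof (induction t arbitrary: a)
  case 0
  then show ?case
    using card_skew_column_entry_01_1[of a m] by simp
next
  case (Suc t)
  then show ?case
    using card_skew_column_entry_01_Suc[of a "Suc t" "m + Suc t"] Suc.IH[of "Suc a"] by simp
qed

text \<open>The entries \<open>1, ..., k - 1\<close> must fill the first \<open>k - 1\<close> cells of the first column.\<close>

lemma card_SYT_entry_01:
  assumes k: "2 \<le> k" and n: "k \<le> n"
  shows "card {T \<in> SYT n. T (0, 1) = k} = card (skew_SYT (hook (k - 1)) (n - k))"
proof -
  obtain t where t: "k = Suc (Suc t)"
    using k by (metis add_2_eq_Suc le_Suc_ex)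
  obtain m where m: "n = Suc (m + Suc t)"
    using n t by (metis add_Suc_right add.commute le_Suc_ex)
  have "card {T \<in> SYT n. T (0, 1) = k} =
      card {T \<in> skew_SYT {(0, 0)} (m + Suc t). insert_min (0, 0) T (0, 1) = Suc (Suc t)}"
    using card_skew_SYT_Suc[OF ferrers_empty, of "m + Suc t" "\<lambda>T. T (0, 1) = Suc (Suc t)"]
    by (simp add: SYT_eq_skew_SYT addable_empty m t)
  also have "{T \<in> skew_SYT {(0, 0)} (m + Suc t). insert_min (0, 0) T (0, 1) = Suc (Suc t)} =
      {T \<in> skew_SYT (column 1) (m + Suc t). T (0, 1) = Suc t}"
    by (auto simp: insert_min_def column_def)
  also have "card \<dots> = card (skew_SYT (hook (k - 1)) (n - k))"
    using card_skew_column_entry_01[of 1 m t] m t by simp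
  finally show ?thesis .
qed

lemma down_paths_column: "down_paths j (column a) = (if j \<le> a then 1 else 0)"
proof (induction j arbitrary: a)
  case (Suc j)
  show ?case
  proof (cases a)
    case (Suc a')
    have "column (Suc a') - {(a', 0)} = column a'"
      by (auto simp: column_def)
    then show ?thesis
      using Suc.IH Suc by (simp add: removable_column)
  qed (simp add: removable_column)
qed simp

lemma down_paths_hook:
  "1 \<le> a \<Longrightarrow> down_paths j (hook a) = (if j < a then j + 1 else if j \<le> a + 1 then a else 0)"
proof (induction j arbitrary: a)
  case (Suc j)
  have minus_corner: "hook a - {(0, 1)} = column a" "hook a - {(0, Suc 0)} = column a"
    by (auto simp: hook_def column_def)
  show ?case
  proof (cases "a = 1")
    case True
    then show ?thesis
      using minus_corner by (simp add: removable_hook down_paths_column)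
  next
    case False
    then have a2: "2 \<le> a"
      using Suc.prems by simp
    have "hook a - {(a - 1, 0)} = hook (a - 1)" "hook a - {(a - Suc 0, 0)} = hook (a - 1)"
      using a2 by (auto simp: hook_def column_def)
    then have "down_paths (Suc j) (hook a) = down_paths j (column a) + down_paths j (hook (a - 1))"
      using a2 by (simp add: removable_hook minus_corner)
    also have "down_paths j (hook (a - 1)) =
        (if j < a - 1 then j + 1 else if j \<le> a - 1 + 1 then a - 1 else 0)"
      using a2 by (intro Suc.IH) simp
    finally show ?thesis
      using a2 by (simp add: down_paths_column; arith)
  qed
qed simp

lemma card_SYT_entry_01_eq_sum:
  assumes k: "2 \<le> k" and n: "2 * k \<le> n"
  shows "card {T \<in> SYT n. T (0, 1) = k} =
    (\<Sum>j\<le>k. down_paths j (hook (k - 1)) * ((n - k) choose j) * telephone (n - k - j))"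
proof -
  have ferrers_hook_k: "ferrers (hook (k - 1))"
    using k by (intro ferrers_hook) simp
  have "card {T \<in> SYT n. T (0, 1) = k} = (\<Sum>j<n - k + 2. up_down_coeff (n - k) j * down_paths j (hook (k - 1)))"
    using k n card_SYT_entry_01 card_skew_SYT_eq_up_paths[OF ferrers_hook_k]
      up_paths_eq_sum_down_paths[OF ferrers_hook_k]
    by simp
  also have "\<dots> = (\<Sum>j\<le>k. up_down_coeff (n - k) j * down_paths j (hook (k - 1)))"
    using k n by (intro sum.mono_neutral_right) (auto simp: down_paths_hook)
  finally show ?thesis
    by (simp add: up_down_coeff_def mult_ac diff_diff_add)
qed

section \<open>Expansions in powers of \<open>n\<^sup>-\<^sup>1\<^sup>/\<^sup>2\<close>\<close>

definition rsqrt :: "nat \<Rightarrow> real" where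
  "rsqrt n = 1 / sqrt (real n)"

definition sqrt_expansion :: "(nat \<Rightarrow> real) \<Rightarrow> real \<Rightarrow> real \<Rightarrow> real \<Rightarrow> real \<Rightarrow> bool" where
  "sqrt_expansion f a0 a1 a2 a3 \<longleftrightarrow>
     (\<lambda>n. f n - (a0 + a1 * rsqrt n + a2 * rsqrt n ^ 2 + a3 * rsqrt n ^ 3)) \<in> O(\<lambda>n. rsqrt n ^ 4)"

lemma rsqrt_nonneg: "0 \<le> rsqrt n"
  by (simp add: rsqrt_def)

lemma rsqrt_power_le_1: "rsqrt n ^ k \<le> 1"
  by (cases "n = 0") (auto simp: rsqrt_def power_le_one)

lemma rsqrt_power_bigo_1: "(\<lambda>n. rsqrt n ^ k) \<in> O(\<lambda>_. 1)"
  by (intro bigoI[where c=1] always_eventually) (simp add: rsqrt_power_le_1 rsqrt_nonneg)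

lemma rsqrt_poly_bigo_1: "(\<lambda>n. a0 + a1 * rsqrt n + a2 * rsqrt n ^ 2 + a3 * rsqrt n ^ 3) \<in> O(\<lambda>_. 1)"
  using rsqrt_power_bigo_1[of 1] rsqrt_power_bigo_1[of 2] rsqrt_power_bigo_1[of 3]
  by (intro sum_in_bigo) auto

lemma sqrt_expansion_bigo_1:
  assumes "sqrt_expansion f a0 a1 a2 a3"
  shows "f \<in> O(\<lambda>_. 1)"
proof -
  have "(\<lambda>n. f n - (a0 + a1 * rsqrt n + a2 * rsqrt n ^ 2 + a3 * rsqrt n ^ 3)) \<in> O(\<lambda>_. 1)"
    using assms rsqrt_power_bigo_1 landau_o.big_trans unfolding sqrt_expansion_def by blast
  from sum_in_bigo(1)[OF this rsqrt_poly_bigo_1[of a0 a1 a2 a3]] show ?thesis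
    by simp
qed

lemma sqrt_expansion_cong:
  assumes "sqrt_expansion f a0 a1 a2 a3" "eventually (\<lambda>n. f n = g n) at_top"
  shows "sqrt_expansion g a0 a1 a2 a3"
  using assms unfolding sqrt_expansion_def
  by (subst (asm) landau_o.big.in_cong[where g="\<lambda>n. g n - (a0 + a1 * rsqrt n + a2 * rsqrt n ^ 2 + a3 * rsqrt n ^ 3)"])
     (auto elim!: eventually_mono)

lemma sqrt_expansion_eq_coeffs:
  "sqrt_expansion f a0 a1 a2 a3 \<Longrightarrow> a0 = b0 \<Longrightarrow> a1 = b1 \<Longrightarrow> a2 = b2 \<Longrightarrow> a3 = b3 \<Longrightarrow>
    sqrt_expansion f b0 b1 b2 b3"
  by simp

lemma sqrt_expansion_poly: "sqrt_expansion (\<lambda>n. a0 + a1 * rsqrt n + a2 * rsqrt n ^ 2 + a3 * rsqrt n ^ 3) a0 a1 a2 a3"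
  by (simp add: sqrt_expansion_def)

lemma sqrt_expansion_const: "sqrt_expansion (\<lambda>n. c) c 0 0 0"
  using sqrt_expansion_poly[of c 0 0 0] by simp

lemma sqrt_expansion_zero: "f \<in> O(\<lambda>n. rsqrt n ^ 4) \<Longrightarrow> sqrt_expansion f 0 0 0 0"
  by (simp add: sqrt_expansion_def)

lemma sqrt_expansion_add:
  assumes "sqrt_expansion f a0 a1 a2 a3" "sqrt_expansion g b0 b1 b2 b3"
  shows "sqrt_expansion (\<lambda>n. f n + g n) (a0 + b0) (a1 + b1) (a2 + b2) (a3 + b3)"
proof -
  have "(\<lambda>n. (f n - (a0 + a1 * rsqrt n + a2 * rsqrt n ^ 2 + a3 * rsqrt n ^ 3)) +
      (g n - (b0 + b1 * rsqrt n + b2 * rsqrt n ^ 2 + b3 * rsqrt n ^ 3))) \<in> O(\<lambda>n. rsqrt n ^ 4)"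
    using assms unfolding sqrt_expansion_def by (rule sum_in_bigo(1))
  then show ?thesis
    unfolding sqrt_expansion_def by (simp add: algebra_simps)
qed

lemma sqrt_expansion_cmult:
  assumes "sqrt_expansion f a0 a1 a2 a3"
  shows "sqrt_expansion (\<lambda>n. c * f n) (c * a0) (c * a1) (c * a2) (c * a3)"
proof -
  have "(\<lambda>n. c * (f n - (a0 + a1 * rsqrt n + a2 * rsqrt n ^ 2 + a3 * rsqrt n ^ 3))) \<in> O(\<lambda>n. rsqrt n ^ 4)"
    using assms unfolding sqrt_expansion_def by (cases "c = 0") auto
  then show ?thesis
    unfolding sqrt_expansion_def by (simp add: algebra_simps)
qed

lemma sqrt_expansion_mult:
  assumes f: "sqrt_expansion f a0 a1 a2 a3" and g: "sqrt_expansion g b0 b1 b2 b3"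
  shows "sqrt_expansion (\<lambda>n. f n * g n) (a0 * b0) (a0 * b1 + a1 * b0) (a0 * b2 + a1 * b1 + a2 * b0)
    (a0 * b3 + a1 * b2 + a2 * b1 + a3 * b0)"
proof -
  define P where "P n = a0 + a1 * rsqrt n + a2 * rsqrt n ^ 2 + a3 * rsqrt n ^ 3" for n
  define Q where "Q n = b0 + b1 * rsqrt n + b2 * rsqrt n ^ 2 + b3 * rsqrt n ^ 3" for n
  define R where "R n = (a1 * b3 + a2 * b2 + a3 * b1) + (a2 * b3 + a3 * b2) * rsqrt n + a3 * b3 * rsqrt n ^ 2" for n
  have f_err: "(\<lambda>n. f n - P n) \<in> O(\<lambda>n. rsqrt n ^ 4)" and g_err: "(\<lambda>n. g n - Q n) \<in> O(\<lambda>n. rsqrt n ^ 4)"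
    using f g unfolding sqrt_expansion_def P_def Q_def by simp_all
  have P: "P \<in> O(\<lambda>_. 1)" and R: "R \<in> O(\<lambda>_. 1)"
    using rsqrt_poly_bigo_1[of a0 a1 a2 a3]
      rsqrt_poly_bigo_1[of "a1 * b3 + a2 * b2 + a3 * b1" "a2 * b3 + a3 * b2" "a3 * b3" 0]
    unfolding P_def[abs_def] R_def[abs_def] by simp_all
  have "(\<lambda>n. (f n - P n) * g n) \<in> O(\<lambda>n. rsqrt n ^ 4)"
    using landau_o.big.mult[OF f_err sqrt_expansion_bigo_1[OF g]] by simp
  moreover have "(\<lambda>n. P n * (g n - Q n)) \<in> O(\<lambda>n. rsqrt n ^ 4)"
    using landau_o.big.mult[OF P g_err] by simp
  moreover have "(\<lambda>n. rsqrt n ^ 4 * R n) \<in> O(\<lambda>n. rsqrt n ^ 4)"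
    using landau_o.big.mult[OF landau_o.big_refl R] by simp
  ultimately have "(\<lambda>n. (f n - P n) * g n + P n * (g n - Q n) + rsqrt n ^ 4 * R n) \<in> O(\<lambda>n. rsqrt n ^ 4)"
    by (intro sum_in_bigo)
  moreover have "(f n - P n) * g n + P n * (g n - Q n) + rsqrt n ^ 4 * R n =
      f n * g n - (a0 * b0 + (a0 * b1 + a1 * b0) * rsqrt n + (a0 * b2 + a1 * b1 + a2 * b0) * rsqrt n ^ 2 +
        (a0 * b3 + a1 * b2 + a2 * b1 + a3 * b0) * rsqrt n ^ 3)" for n
    by (simp add: P_def Q_def R_def algebra_simps power2_eq_square power3_eq_cube power4_eq_xxxx)
  ultimately show ?thesis
    unfolding sqrt_expansion_def by simp
qed

lemma sqrt_expansion_rsqrt_mult: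
  assumes "sqrt_expansion f a0 a1 a2 a3"
  shows "sqrt_expansion (\<lambda>n. rsqrt n * f n) 0 a0 a1 a2"
  using sqrt_expansion_mult[OF sqrt_expansion_poly[of 0 1 0 0] assms] by simp

lemma sqrt_expansion_rsqrt_power2_mult:
  assumes "sqrt_expansion f a0 a1 a2 a3"
  shows "sqrt_expansion (\<lambda>n. rsqrt n ^ 2 * f n) 0 0 a0 a1"
  using sqrt_expansion_rsqrt_mult[OF sqrt_expansion_rsqrt_mult[OF assms]]
  by (rule sqrt_expansion_cong) (simp add: power2_eq_square)

lemma sqrt_expansion_rsqrt_power3_mult:
  assumes "sqrt_expansion f a0 a1 a2 a3"
  shows "sqrt_expansion (\<lambda>n. rsqrt n ^ 3 * f n) 0 0 0 a0"
  using sqrt_expansion_rsqrt_mult[OF sqrt_expansion_rsqrt_power2_mult[OF assms]]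
  by (rule sqrt_expansion_cong) (simp add: power3_eq_cube power2_eq_square)

lemma rsqrt_diff_bigo:
  "(\<lambda>n. rsqrt (n - 1) - (rsqrt n + rsqrt n ^ 3 / 2)) \<in> O(\<lambda>n. rsqrt n ^ 4)"
  "(\<lambda>n. rsqrt (n - 1) ^ 2 - rsqrt n ^ 2) \<in> O(\<lambda>n. rsqrt n ^ 4)"
  "(\<lambda>n. rsqrt (n - 1) ^ 3 - rsqrt n ^ 3) \<in> O(\<lambda>n. rsqrt n ^ 4)"
  "(\<lambda>n. rsqrt (n - 1) ^ 4) \<in> O(\<lambda>n. rsqrt n ^ 4)"
proof -
  have rsqrt_pred: "eventually (\<lambda>n. rsqrt (n - 1) = 1 / sqrt (real n - 1)) at_top"
    by (intro eventually_at_top_linorderI[of 1]) (auto simp: rsqrt_def of_nat_diff)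
  have rsqrt_4: "(\<lambda>n. rsqrt n ^ 4) = (\<lambda>n. (1 / sqrt (real n)) ^ 4)"
    by (simp add: rsqrt_def)
  have from_real: "(\<lambda>n. h (rsqrt (n - 1)) (rsqrt n)) \<in> O(\<lambda>n. rsqrt n ^ 4)"
    if "(\<lambda>n. h (1 / sqrt (real n - 1)) (1 / sqrt (real n))) \<in> O(\<lambda>n. (1 / sqrt (real n)) ^ 4)" for h
  proof -
    have "eventually (\<lambda>n. h (rsqrt (n - 1)) (rsqrt n) = h (1 / sqrt (real n - 1)) (1 / sqrt (real n))) at_top"
      using rsqrt_pred by eventually_elim (simp add: rsqrt_def)
    then show ?thesis
      unfolding rsqrt_4 using that by (subst landau_o.big.in_cong) auto
  qed
  have "(\<lambda>n. 1 / sqrt (real n - 1) - (1 / sqrt (real n) + (1 / sqrt (real n)) ^ 3 / 2)) \<in> O(\<lambda>n. (1 / sqrt (real n)) ^ 4)"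
    "(\<lambda>n. (1 / sqrt (real n - 1)) ^ 2 - (1 / sqrt (real n)) ^ 2) \<in> O(\<lambda>n. (1 / sqrt (real n)) ^ 4)"
    "(\<lambda>n. (1 / sqrt (real n - 1)) ^ 3 - (1 / sqrt (real n)) ^ 3) \<in> O(\<lambda>n. (1 / sqrt (real n)) ^ 4)"
    "(\<lambda>n. (1 / sqrt (real n - 1)) ^ 4) \<in> O(\<lambda>n. (1 / sqrt (real n)) ^ 4)"
    by real_asymp+
  then show "(\<lambda>n. rsqrt (n - 1) - (rsqrt n + rsqrt n ^ 3 / 2)) \<in> O(\<lambda>n. rsqrt n ^ 4)"
    "(\<lambda>n. rsqrt (n - 1) ^ 2 - rsqrt n ^ 2) \<in> O(\<lambda>n. rsqrt n ^ 4)"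
    "(\<lambda>n. rsqrt (n - 1) ^ 3 - rsqrt n ^ 3) \<in> O(\<lambda>n. rsqrt n ^ 4)"
    "(\<lambda>n. rsqrt (n - 1) ^ 4) \<in> O(\<lambda>n. rsqrt n ^ 4)"
    using from_real[of "\<lambda>x y. x - (y + y ^ 3 / 2)"] from_real[of "\<lambda>x y. x ^ 2 - y ^ 2"]
      from_real[of "\<lambda>x y. x ^ 3 - y ^ 3"] from_real[of "\<lambda>x y. x ^ 4"]
    by simp_all
qed

lemma sqrt_expansion_shift:
  assumes "sqrt_expansion f a0 a1 a2 a3"
  shows "sqrt_expansion (\<lambda>n. f (n - 1)) a0 a1 a2 (a3 + a1 / 2)"
proof -
  define E where "E n = f n - (a0 + a1 * rsqrt n + a2 * rsqrt n ^ 2 + a3 * rsqrt n ^ 3)" for n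
  have "E \<in> O(\<lambda>n. rsqrt n ^ 4)"
    using assms unfolding sqrt_expansion_def E_def by simp
  then have "(\<lambda>n. E (n - 1)) \<in> O(\<lambda>n. rsqrt (n - 1) ^ 4)"
    using landau_o.big.compose[OF _ filterlim_minus_const_nat_at_top[of 1]] by simp
  then have "(\<lambda>n. E (n - 1) + a1 * (rsqrt (n - 1) - (rsqrt n + rsqrt n ^ 3 / 2)) +
      a2 * (rsqrt (n - 1) ^ 2 - rsqrt n ^ 2) + a3 * (rsqrt (n - 1) ^ 3 - rsqrt n ^ 3)) \<in> O(\<lambda>n. rsqrt n ^ 4)"
    using landau_o.big_trans rsqrt_diff_bigo by (intro sum_in_bigo) auto
  then show ?thesis
    unfolding sqrt_expansion_def by (simp add: E_def algebra_simps)
qed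

section \<open>Asymptotics of the telephone numbers\<close>

definition tel_ratio :: "nat \<Rightarrow> real" where
  "tel_ratio n = telephone (n - 1) / telephone n"

lemma tel_ratio_pos: "0 < tel_ratio n"
  using telephone_pos[of n] telephone_pos[of "n - 1"] by (simp add: tel_ratio_def)

lemma tel_ratio_rec:
  assumes "2 \<le> n"
  shows "tel_ratio n * (1 + (real n - 1) * tel_ratio (n - 1)) = 1"
proof -
  obtain m where m: "n = Suc (Suc m)"
    using assms by (metis add_2_eq_Suc le_Suc_ex)
  have pos: "0 < real (telephone m)" "0 < real (telephone (Suc m))"
    using telephone_pos by auto
  have "1 + (real n - 1) * tel_ratio (n - 1) = (telephone (Suc m) + Suc m * telephone m) / telephone (Suc m)"
    using pos by (simp add: m tel_ratio_def field_simps)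
  moreover have "tel_ratio n = telephone (Suc m) / (telephone (Suc m) + Suc m * telephone m)"
    by (simp add: m tel_ratio_def)
  moreover have "0 < real (telephone (Suc m)) + Suc m * telephone m"
    using pos by (simp add: add_pos_nonneg)
  ultimately show ?thesis
    using pos by simp
qed

text \<open>Two steps of the recurrence give \<open>tel_ratio n = (1 + x) / (n + x)\<close> with
  \<open>x = (n - 2) * tel_ratio (n - 2)\<close>; this is increasing in \<open>x\<close> and equals \<open>1 / sqrt n\<close> at \<open>x = sqrt n\<close>.\<close>

lemma tel_ratio_le: "1 \<le> n \<Longrightarrow> real n * tel_ratio n \<le> sqrt n"
proof (induction n rule: less_induct)
  case (less n)
  show ?case
  proof (cases "n \<le> 2")
    case True
    then have "n = 1 \<or> n = 2"
      using less.prems by auto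
    moreover have "1 \<le> sqrt (2::real)"
      by simp
    ultimately show ?thesis
      by (auto simp: tel_ratio_def numeral_2_eq_2)
  next
    case False
    define x where "x = real (n - 2) * tel_ratio (n - 2)"
    have x0: "0 \<le> x"
      using tel_ratio_pos[of "n - 2"] by (simp add: x_def)
    have "x \<le> sqrt (real (n - 2))"
      unfolding x_def using less.IH[of "n - 2"] False by simp
    also have "\<dots> \<le> sqrt (real n)"
      by simp
    finally have x_le: "x \<le> sqrt n" .
    have "tel_ratio (n - 1) * (1 + x) = 1"
      using tel_ratio_rec[of "n - 1"] False unfolding x_def by (simp add: of_nat_diff algebra_simps numeral_2_eq_2)
    then have "tel_ratio (n - 1) = 1 / (1 + x)"
      using x0 by (simp add: field_simps)
    then have "tel_ratio n * (1 + (real n - 1) / (1 + x)) = 1"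
      using tel_ratio_rec[of n] False by simp
    moreover have "1 + (real n - 1) / (1 + x) = (n + x) / (1 + x)"
      using x0 by (simp add: field_simps)
    ultimately have "tel_ratio n * (n + x) = 1 + x"
      using x0 by (simp add: field_simps)
    then have ratio: "tel_ratio n = (1 + x) / (n + x)"
      using x0 False by (simp add: eq_divide_eq)
    define y where "y = sqrt (real n)"
    have "0 \<le> y * (y - 1) * (y - x)"
      using False x_le by (simp add: y_def)
    moreover have "y * y = n"
      by (simp add: y_def)
    ultimately have "real n * (1 + x) \<le> y * (real n + x)"
      by (simp add: algebra_simps)
    then show ?thesis
      using ratio x0 False by (simp add: y_def divide_le_eq)
  qed
qed

lemma tel_ratio_le_rsqrt:
  assumes "1 \<le> n"
  shows "tel_ratio n \<le> rsqrt n"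
proof -
  have "(tel_ratio n * sqrt n) * sqrt n = real n * tel_ratio n"
    by (simp add: mult.assoc mult.commute)
  then have "(tel_ratio n * sqrt n) * sqrt n \<le> 1 * sqrt n"
    using tel_ratio_le[OF assms] by linarith
  then have "tel_ratio n * sqrt n \<le> 1"
    using assms by (simp add: mult_le_cancel_right)
  then show ?thesis
    using assms by (simp add: rsqrt_def le_divide_eq)
qed

lemma contracting_recurrence_bounded:
  fixes E w :: "nat \<Rightarrow> real"
  assumes rec: "\<And>n. N < n \<Longrightarrow> E n \<le> (1 - c * w n) * E (n - 1) + C * w n"
    and w: "\<And>n. N < n \<Longrightarrow> 0 \<le> w n \<and> c * w n \<le> 1" and c: "0 < c"
  shows "N \<le> n \<Longrightarrow> E n \<le> max (E N) (C / c)"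
proof (induction n rule: dec_induct)
  case (step n)
  define M where "M = max (E N) (C / c)"
  have "C / c \<le> M"
    by (simp add: M_def)
  then have "C \<le> c * M"
    using c by (simp add: divide_le_eq mult.commute)
  have "E (Suc n) \<le> (1 - c * w (Suc n)) * E n + C * w (Suc n)"
    using rec[of "Suc n"] step.hyps by simp
  also have "\<dots> \<le> (1 - c * w (Suc n)) * M + C * w (Suc n)"
    using w[of "Suc n"] step by (intro add_right_mono mult_left_mono) (auto simp: M_def)
  also have "\<dots> = M - (c * M - C) * w (Suc n)"
    by (simp add: algebra_simps)
  also have "\<dots> \<le> M"
    using \<open>C \<le> c * M\<close> w[of "Suc n"] step.hyps by simp
  finally show ?case
    by (simp add: M_def)
qed simp

lemma rescaled_recurrence_step:
  fixes e :: "nat \<Rightarrow> real"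
  assumes n: "2 \<le> n" and e: "\<bar>e n\<bar> \<le> (1 - rsqrt n / 4) * \<bar>e (n - 1)\<bar> + C * rsqrt n ^ 6"
    and contract: "(1 - 1 / (4 * sqrt n)) * (sqrt n / sqrt (real n - 1)) ^ 5 \<le> 1 - 1 / (8 * sqrt n)"
  shows "\<bar>e n\<bar> * sqrt n ^ 5 \<le> (1 - 1 / 8 * rsqrt n) * (\<bar>e (n - 1)\<bar> * sqrt (real (n - 1)) ^ 5) + C * rsqrt n"
proof -
  have pos: "0 < sqrt (real n)" "0 < sqrt (real n - 1)"
    using n by auto
  have six: "sqrt (real n) ^ 6 = sqrt (real n) * sqrt (real n) ^ 5"
    by (simp add: eval_nat_numeral)
  have "\<bar>e n\<bar> * sqrt n ^ 5 \<le> ((1 - rsqrt n / 4) * \<bar>e (n - 1)\<bar> + C * rsqrt n ^ 6) * sqrt n ^ 5"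
    using e by (intro mult_right_mono) auto
  also have "\<dots> = ((1 - 1 / (4 * sqrt n)) * (sqrt n / sqrt (real n - 1)) ^ 5) *
      (\<bar>e (n - 1)\<bar> * sqrt (real (n - 1)) ^ 5) + C * rsqrt n"
    using pos n by (simp add: rsqrt_def of_nat_diff field_simps power_divide six)
  also have "\<dots> \<le> (1 - 1 / 8 * rsqrt n) * (\<bar>e (n - 1)\<bar> * sqrt (real (n - 1)) ^ 5) + C * rsqrt n"
    using contract by (intro add_right_mono mult_right_mono) (auto simp: rsqrt_def)
  finally show ?thesis .
qed

lemma bigo_rsqrt_5_of_contracting_recurrence:
  fixes e :: "nat \<Rightarrow> real"
  assumes rec: "eventually (\<lambda>n. \<bar>e n\<bar> \<le> (1 - rsqrt n / 4) * \<bar>e (n - 1)\<bar> + C * rsqrt n ^ 6) at_top"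
  shows "e \<in> O(\<lambda>n. rsqrt n ^ 5)"
proof -
  define E where "E n = \<bar>e n\<bar> * sqrt n ^ 5" for n
  have "eventually (\<lambda>n. (1 - 1 / (4 * sqrt n)) * (sqrt n / sqrt (real n - 1)) ^ 5 \<le> 1 - 1 / (8 * sqrt n)) at_top"
    by real_asymp
  then have "eventually (\<lambda>n. E n \<le> (1 - 1 / 8 * rsqrt n) * E (n - 1) + C * rsqrt n) at_top"
    using rec eventually_ge_at_top[of 2]
    by eventually_elim (unfold E_def, rule rescaled_recurrence_step, assumption+)
  then obtain N where N: "\<And>n. N \<le> n \<Longrightarrow> E n \<le> (1 - 1 / 8 * rsqrt n) * E (n - 1) + C * rsqrt n"
    unfolding eventually_at_top_linorder by blast
  have "0 \<le> rsqrt n \<and> 1 / 8 * rsqrt n \<le> 1" for n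
    using rsqrt_power_le_1[of n 1] by (simp add: rsqrt_nonneg)
  then have bound: "E n \<le> max (E N) (C / (1 / 8))" if "N \<le> n" for n
    using contracting_recurrence_bounded[of N E "1 / 8" rsqrt C n] N that by simp
  show ?thesis
  proof (rule bigoI[where c="max (E N) (C / (1 / 8))"])
    show "eventually (\<lambda>n. norm (e n) \<le> max (E N) (C / (1 / 8)) * norm (rsqrt n ^ 5)) at_top"
    proof (rule eventually_at_top_linorderI[of "max N 1"])
      fix n assume n: "max N 1 \<le> n"
      then have "\<bar>e n\<bar> = E n * rsqrt n ^ 5"
        by (simp add: E_def rsqrt_def power_divide)
      then show "norm (e n) \<le> max (E N) (C / (1 / 8)) * norm (rsqrt n ^ 5)"
        using bound[of n] n by (simp add: mult_right_mono rsqrt_nonneg)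
    qed
  qed
qed

text \<open>A truncation of the formal solution of \<open>r n * (1 + (n - 1) * r (n - 1)) = 1\<close> in powers
  of \<open>n\<^sup>-\<^sup>1\<^sup>/\<^sup>2\<close>.\<close>

definition tel_ratio_approx :: "nat \<Rightarrow> real" where
  "tel_ratio_approx n =
    rsqrt n * (1 - rsqrt n / 2 + 3 / 8 * rsqrt n ^ 2 - 1 / 8 * rsqrt n ^ 3 - 1 / 128 * rsqrt n ^ 4)"

lemma tel_ratio_approx_defect:
  "(\<lambda>n. tel_ratio_approx n * (1 + (real n - 1) * tel_ratio_approx (n - 1)) - 1) \<in> O(\<lambda>n. rsqrt n ^ 5)"
proof -
  define g :: "real \<Rightarrow> real" where
    "g x = 1 / sqrt x * (1 - 1 / sqrt x / 2 + 3 / 8 * (1 / sqrt x) ^ 2 - 1 / 8 * (1 / sqrt x) ^ 3 -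
      1 / 128 * (1 / sqrt x) ^ 4)" for x
  have "(\<lambda>n. g (real n) * (1 + (real n - 1) * g (real n - 1)) - 1) \<in> O(\<lambda>n. (1 / sqrt (real n)) ^ 5)"
    unfolding g_def by real_asymp
  moreover have "eventually (\<lambda>n. g (real n) * (1 + (real n - 1) * g (real n - 1)) - 1 =
      tel_ratio_approx n * (1 + (real n - 1) * tel_ratio_approx (n - 1)) - 1) at_top"
    by (intro eventually_at_top_linorderI[of 1]) (simp add: g_def tel_ratio_approx_def rsqrt_def of_nat_diff)
  ultimately show ?thesis
    unfolding rsqrt_def by (subst (asm) landau_o.big.in_cong) auto
qed

lemma tel_ratio_approx_contracting:
  "eventually (\<lambda>n. (real n - 1) * rsqrt n * tel_ratio_approx n \<le> 1 - rsqrt n / 4 \<and> 0 \<le> tel_ratio_approx n) at_top"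
  unfolding tel_ratio_approx_def rsqrt_def by (intro eventually_conj; real_asymp)

lemma tel_ratio_error: "(\<lambda>n. tel_ratio n - tel_ratio_approx n) \<in> O(\<lambda>n. rsqrt n ^ 5)"
proof -
  define e where "e n = tel_ratio n - tel_ratio_approx n" for n
  define d where "d n = tel_ratio_approx n * (1 + (real n - 1) * tel_ratio_approx (n - 1)) - 1" for n
  obtain C where "eventually (\<lambda>n. norm (d n) \<le> C * norm (rsqrt n ^ 5)) at_top"
    using tel_ratio_approx_defect unfolding d_def by (elim landau_o.bigE)
  then have "eventually (\<lambda>n. \<bar>d n\<bar> \<le> C * rsqrt n ^ 5 \<and> 2 \<le> n \<and>
      (real n - 1) * rsqrt n * tel_ratio_approx n \<le> 1 - rsqrt n / 4 \<and> 0 \<le> tel_ratio_approx n) at_top"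
    using tel_ratio_approx_contracting eventually_ge_at_top[of 2]
    by eventually_elim (simp add: rsqrt_nonneg)
  then have "eventually (\<lambda>n. \<bar>e n\<bar> \<le> (1 - rsqrt n / 4) * \<bar>e (n - 1)\<bar> + C * rsqrt n ^ 6) at_top"
  proof eventually_elim
    case (elim n)
    then have n: "2 \<le> n" and approx: "0 \<le> tel_ratio_approx n"
      and contract: "(real n - 1) * rsqrt n * tel_ratio_approx n \<le> 1 - rsqrt n / 4"
      by auto
    have ratio: "0 < tel_ratio n" "tel_ratio n \<le> rsqrt n"
      using tel_ratio_pos tel_ratio_le_rsqrt[of n] n by auto
    have rec: "tel_ratio n * (1 + (real n - 1) * tel_ratio (n - 1)) = 1"
      by (rule tel_ratio_rec[OF n])
    then have "tel_ratio_approx n * tel_ratio n * (1 + (real n - 1) * tel_ratio (n - 1)) = tel_ratio_approx n"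
      by (simp add: mult.assoc)
    then have "e n = - tel_ratio n * (d n + (real n - 1) * tel_ratio_approx n * e (n - 1))"
      using rec by (simp add: e_def d_def algebra_simps)
    then have "\<bar>e n\<bar> \<le> tel_ratio n * (\<bar>d n\<bar> + (real n - 1) * tel_ratio_approx n * \<bar>e (n - 1)\<bar>)"
      using ratio approx n by (simp add: abs_mult abs_triangle_ineq order_trans[OF abs_triangle_ineq])
    also have "\<dots> \<le> rsqrt n * (\<bar>d n\<bar> + (real n - 1) * tel_ratio_approx n * \<bar>e (n - 1)\<bar>)"
      using ratio approx n by (intro mult_right_mono) auto
    also have "\<dots> = rsqrt n * \<bar>d n\<bar> + ((real n - 1) * rsqrt n * tel_ratio_approx n) * \<bar>e (n - 1)\<bar>"
      by (simp add: algebra_simps)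
    also have "\<dots> \<le> rsqrt n * (C * rsqrt n ^ 5) + (1 - rsqrt n / 4) * \<bar>e (n - 1)\<bar>"
      using elim contract by (intro add_mono mult_left_mono mult_right_mono) (auto simp: rsqrt_nonneg)
    also have "\<dots> = (1 - rsqrt n / 4) * \<bar>e (n - 1)\<bar> + C * rsqrt n ^ 6"
      by (simp add: eval_nat_numeral)
    finally show ?case .
  qed
  then show ?thesis
    unfolding e_def by (rule bigo_rsqrt_5_of_contracting_recurrence)
qed

lemma tel_ratio_expansion: "sqrt_expansion (\<lambda>n. tel_ratio n * sqrt n) 1 (- 1 / 2) (3 / 8) (- 1 / 8)"
proof -
  have "(\<lambda>n. (tel_ratio n - tel_ratio_approx n) * sqrt n) \<in> O(\<lambda>n. rsqrt n ^ 5 * sqrt n)"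
    using tel_ratio_error by (rule landau_o.big.mult_right)
  also have "(\<lambda>n. rsqrt n ^ 5 * sqrt n) \<in> O(\<lambda>n. rsqrt n ^ 4)"
    by (intro bigoI[where c=1] always_eventually) (simp add: rsqrt_def power_divide eval_nat_numeral)
  finally have "(\<lambda>n. (tel_ratio n - tel_ratio_approx n) * sqrt n - 1 / 128 * rsqrt n ^ 4) \<in> O(\<lambda>n. rsqrt n ^ 4)"
    by (intro sum_in_bigo) auto
  moreover have "(tel_ratio n - tel_ratio_approx n) * sqrt n - 1 / 128 * rsqrt n ^ 4 =
      tel_ratio n * sqrt n - (1 + (- 1 / 2) * rsqrt n + (3 / 8) * rsqrt n ^ 2 + (- 1 / 8) * rsqrt n ^ 3)"
    if "1 \<le> n" for n
    using that by (simp add: tel_ratio_approx_def rsqrt_def field_simps eval_nat_numeral)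
  ultimately show ?thesis
    unfolding sqrt_expansion_def
    by (subst (asm) landau_o.big.in_cong) (auto intro: eventually_at_top_linorderI[of 1])
qed

definition sqrt_ratio :: "nat \<Rightarrow> real" where
  "sqrt_ratio n = sqrt n / sqrt (real (n - 1))"

lemma sqrt_ratio_expansion: "sqrt_expansion sqrt_ratio 1 0 (1 / 2) 0"
proof -
  have "(\<lambda>n. sqrt n / sqrt (real n - 1) - (1 + (1 / sqrt n) ^ 2 / 2)) \<in> O(\<lambda>n. (1 / sqrt n) ^ 4)"
    by real_asymp
  moreover have "eventually (\<lambda>n. sqrt n / sqrt (real n - 1) - (1 + (1 / sqrt n) ^ 2 / 2) =
      sqrt_ratio n - (1 + 0 * rsqrt n + 1 / 2 * rsqrt n ^ 2 + 0 * rsqrt n ^ 3)) at_top"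
    by (intro eventually_at_top_linorderI[of 1]) (auto simp: sqrt_ratio_def rsqrt_def of_nat_diff)
  ultimately show ?thesis
    unfolding sqrt_expansion_def rsqrt_def[abs_def] by (subst (asm) landau_o.big.in_cong) auto
qed

lemma sqrt_ratio_power_expansion: "sqrt_expansion (\<lambda>n. sqrt_ratio n ^ m) 1 0 (real m / 2) 0"
proof (induction m)
  case 0
  then show ?case
    using sqrt_expansion_const[of 1] by simp
next
  case (Suc m)
  from sqrt_expansion_mult[OF sqrt_ratio_expansion Suc.IH] show ?case
    unfolding power_Suc by (rule sqrt_expansion_eq_coeffs) (auto simp: field_simps)
qed

definition tel_quot :: "nat \<Rightarrow> nat \<Rightarrow> real" where
  "tel_quot m n = telephone (n - m) / telephone n"

lemma tel_quot_Suc: "1 \<le> n \<Longrightarrow> tel_quot (Suc m) n = tel_ratio n * tel_quot m (n - 1)"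
  using telephone_pos[of "n - 1"] by (simp add: tel_quot_def tel_ratio_def)

lemma tel_quot_expansion:
  "sqrt_expansion (\<lambda>n. tel_quot m n * sqrt n ^ m) 1 (- real m / 2) (3 * real m ^ 2 / 8)
    (- (7 * real m ^ 3 + 6 * real m ^ 2 - 7 * real m) / 48)"
proof (induction m)
  case 0
  have "tel_quot 0 n = 1" for n
    using telephone_pos[of n] by (simp add: tel_quot_def)
  then show ?case
    using sqrt_expansion_const[of 1] by simp
next
  case (Suc m)
  note product = sqrt_expansion_mult[OF sqrt_expansion_mult[OF tel_ratio_expansion
      sqrt_expansion_shift[OF Suc.IH]] sqrt_ratio_power_expansion[of m]]
  have "(tel_ratio n * sqrt n) * (tel_quot m (n - 1) * sqrt (real (n - 1)) ^ m) * sqrt_ratio n ^ m =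
      tel_quot (Suc m) n * sqrt n ^ Suc m" if "2 \<le> n" for n
  proof -
    have "sqrt (real (n - 1)) ^ m * sqrt_ratio n ^ m = sqrt n ^ m"
      using that by (simp add: sqrt_ratio_def flip: power_mult_distrib)
    then show ?thesis
      using that by (simp add: tel_quot_Suc mult_ac)
  qed
  then have "eventually (\<lambda>n. (tel_ratio n * sqrt n) * (tel_quot m (n - 1) * sqrt (real (n - 1)) ^ m) *
      sqrt_ratio n ^ m = tel_quot (Suc m) n * sqrt n ^ Suc m) at_top"
    by (intro eventually_at_top_linorderI[of 2])
  from sqrt_expansion_cong[OF product this] show ?case
    by (rule sqrt_expansion_eq_coeffs) (simp_all add: field_simps power2_eq_square power3_eq_cube)
qed

lemma binomial_falling_expansion:
  "sqrt_expansion (\<lambda>n. real ((n - k) choose j) * fact j / real n ^ j) 1 0 (- (real j * real k + real j * (real j - 1) / 2)) 0"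
proof (induction j)
  case 0
  then show ?case
    using sqrt_expansion_const[of 1] by simp
next
  case (Suc j)
  note product = sqrt_expansion_mult[OF Suc.IH sqrt_expansion_poly[of 1 0 "- (real k + real j)" 0]]
  have "real ((n - k) choose j) * fact j / real n ^ j * (1 + 0 * rsqrt n + - (real k + real j) * rsqrt n ^ 2 + 0 * rsqrt n ^ 3) =
      real ((n - k) choose Suc j) * fact (Suc j) / real n ^ Suc j" if n: "k + j + 1 \<le> n" for n
  proof -
    define N where "N = n - k"
    have "Suc j * (N choose Suc j) = (N - j) * (N choose j)"
      using binomial_absorption[of j N] binomial_absorb_comp[of N j] by simp
    then have absorb: "real (Suc j) * real (N choose Suc j) = real (N - j) * real (N choose j)"
      by (metis of_nat_mult)
    have "real (N choose Suc j) * fact (Suc j) = (real (Suc j) * real (N choose Suc j)) * fact j"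
      by (simp only: fact_Suc mult_ac)
    also have "\<dots> = real (N - j) * (real (N choose j) * fact j)"
      unfolding absorb by (simp only: mult_ac)
    finally have falling: "real (N choose Suc j) * fact (Suc j) = real (N - j) * (real (N choose j) * fact j)" .
    have poly: "1 + 0 * rsqrt n + - (real k + real j) * rsqrt n ^ 2 + 0 * rsqrt n ^ 3 = real (N - j) / real n"
      using n by (simp add: rsqrt_def power_divide N_def of_nat_diff field_simps)
    have "real (N choose j) * fact j / real n ^ j * (real (N - j) / real n) =
        real (N choose Suc j) * fact (Suc j) / real n ^ Suc j"
      unfolding falling using n by (simp add: field_simps)
    then show ?thesis
      unfolding poly N_def .
  qed
  then have "eventually (\<lambda>n. real ((n - k) choose j) * fact j / real n ^ j *
      (1 + 0 * rsqrt n + - (real k + real j) * rsqrt n ^ 2 + 0 * rsqrt n ^ 3) =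
      real ((n - k) choose Suc j) * fact (Suc j) / real n ^ Suc j) at_top"
    by (intro eventually_at_top_linorderI[of "k + j + 1"])
  from sqrt_expansion_cong[OF product this] show ?case
    by (rule sqrt_expansion_eq_coeffs) (simp_all add: algebra_simps)
qed

definition scaled_term :: "nat \<Rightarrow> nat \<Rightarrow> nat \<Rightarrow> real" where
  "scaled_term k j n = real ((n - k) choose j) * fact j / real n ^ j * (tel_quot (k + j) n * sqrt n ^ (k + j))"

lemma scaled_term_expansion:
  fixes k j :: nat
  defines "m \<equiv> real (k + j)" and "b \<equiv> real j * real k + real j * (real j - 1) / 2"
  shows "sqrt_expansion (scaled_term k j)
    1 (- m / 2) (3 * m ^ 2 / 8 - b) (- (7 * m ^ 3 + 6 * m ^ 2 - 7 * m) / 48 + m * b / 2)"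
  unfolding scaled_term_def[abs_def]
  using sqrt_expansion_mult[OF binomial_falling_expansion[of k j] tel_quot_expansion[of "k + j"]]
  by (rule sqrt_expansion_eq_coeffs) (simp_all add: m_def b_def field_simps power2_eq_square)

lemma term_eq_scaled_term:
  assumes "j \<le> k" "0 < n"
  shows "real ((n - k) choose j) * tel_quot (k + j) n = rsqrt n ^ (k - j) / fact j * scaled_term k j n"
proof -
  have "k + j = (k - j) + 2 * j"
    using assms by simp
  then have "sqrt (real n) ^ (k + j) = sqrt (real n) ^ (k - j) * (sqrt (real n) ^ 2) ^ j"
    by (simp only: power_add power_mult)
  then have "sqrt (real n) ^ (k + j) = sqrt (real n) ^ (k - j) * real n ^ j"
    by simp
  moreover have "rsqrt n ^ (k - j) * sqrt (real n) ^ (k - j) = 1"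
    using assms by (simp add: rsqrt_def power_divide)
  ultimately show ?thesis
    using assms by (simp add: scaled_term_def field_simps)
qed

lemma rsqrt_power_scaled_term_bigo:
  assumes "j + 4 \<le> k"
  shows "(\<lambda>n. rsqrt n ^ (k - j) * scaled_term k j n) \<in> O(\<lambda>n. rsqrt n ^ 4)"
proof -
  have "k - j = 4 + (k - j - 4)"
    using assms by simp
  then have split_power: "rsqrt n ^ (k - j) * scaled_term k j n = rsqrt n ^ 4 * (rsqrt n ^ (k - j - 4) * scaled_term k j n)" for n
    by (metis power_add mult.assoc)
  have "(\<lambda>n. rsqrt n ^ (k - j - 4) * scaled_term k j n) \<in> O(\<lambda>_. 1)"
    using landau_o.big.mult[OF rsqrt_power_bigo_1 sqrt_expansion_bigo_1[OF scaled_term_expansion]] by simp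
  from landau_o.big.mult[OF landau_o.big_refl this] show ?thesis
    unfolding split_power by simp
qed

lemma top_terms_expansion:
  "sqrt_expansion (\<lambda>n. real (K + 1) / fact K * (rsqrt n ^ 3 * scaled_term (K + 3) K n) +
      real (K + 2) / fact (K + 1) * (rsqrt n ^ 2 * scaled_term (K + 3) (K + 1) n) +
      real (K + 2) / fact (K + 2) * (rsqrt n * scaled_term (K + 3) (K + 2) n) +
      real (K + 2) / fact (K + 3) * scaled_term (K + 3) (K + 3) n)
    (real (K + 2) / fact (K + 3)) 0 0 ((real K - 1) / (3 * fact K))"
proof -
  note sum = sqrt_expansion_add[OF sqrt_expansion_add[OF sqrt_expansion_add[OF
      sqrt_expansion_cmult[OF sqrt_expansion_rsqrt_power3_mult[OF scaled_term_expansion[of "K + 3" K]]]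
      sqrt_expansion_cmult[OF sqrt_expansion_rsqrt_power2_mult[OF scaled_term_expansion[of "K + 3" "K + 1"]]]]
      sqrt_expansion_cmult[OF sqrt_expansion_rsqrt_mult[OF scaled_term_expansion[of "K + 3" "K + 2"]]]]
      sqrt_expansion_cmult[OF scaled_term_expansion[of "K + 3" "K + 3"]]]
  have fact_K: "(fact (K + 3) :: real) = (real K + 3) * (real K + 2) * (real K + 1) * fact K"
    "(fact (K + 2) :: real) = (real K + 2) * (real K + 1) * fact K" "(fact (K + 1) :: real) = (real K + 1) * fact K"
    by (simp_all add: fact_Suc numeral_3_eq_3 numeral_2_eq_2 algebra_simps)
  have nz: "(fact K :: real) \<noteq> 0" "real K + 1 \<noteq> 0" "real K + 2 \<noteq> 0" "real K + 3 \<noteq> 0"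
    by auto
  show ?thesis
    using sum unfolding fact_K
    by (rule sqrt_expansion_eq_coeffs)
      (use nz in \<open>simp add: divide_simps; simp add: algebra_simps power2_eq_square power3_eq_cube\<close>)+
qed

text \<open>Up to \<open>O(n\<^sup>-\<^sup>2)\<close> only the terms \<open>j = k - 3, ..., k\<close> contribute.\<close>

lemma hook_sum_expansion:
  assumes "3 \<le> k"
  shows "sqrt_expansion (\<lambda>n. \<Sum>j\<le>k. real (down_paths j (hook (k - 1))) * (real ((n - k) choose j) * tel_quot (k + j) n))
    (real (k - 1) / fact k) 0 0 ((real k - 4) / (3 * fact (k - 3)))"
proof -
  obtain K where k: "k = K + 3"
    using assms by (metis add.commute le_Suc_ex)
  define c where "c j = real (down_paths j (hook (k - 1))) / fact j" for j
  have "down_paths K (hook (k - 1)) = K + 1" "down_paths (K + 1) (hook (k - 1)) = K + 2"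
    "down_paths (K + 2) (hook (k - 1)) = K + 2" "down_paths (K + 3) (hook (k - 1)) = K + 2"
    using down_paths_hook[of "k - 1"] k by (simp_all del: down_paths.simps)
  then have c_top: "c K = real (K + 1) / fact K" "c (K + 1) = real (K + 2) / fact (K + 1)"
    "c (K + 2) = real (K + 2) / fact (K + 2)" "c (K + 3) = real (K + 2) / fact (K + 3)"
    by (simp_all only: c_def)
  have "{..k} = {..<K} \<union> {K, K + 1, K + 2, K + 3}"
    by (auto simp: k)
  then have split: "(\<Sum>j\<le>k. f j) = (\<Sum>j<K. f j) + f K + f (K + 1) + f (K + 2) + f (K + 3)" for f :: "nat \<Rightarrow> real"
    by (simp add: sum.union_disjoint add_ac)
  have ev: "eventually (\<lambda>n. (\<Sum>j<K. c j * (rsqrt n ^ (k - j) * scaled_term k j n)) +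
      (real (K + 1) / fact K * (rsqrt n ^ 3 * scaled_term (K + 3) K n) +
      real (K + 2) / fact (K + 1) * (rsqrt n ^ 2 * scaled_term (K + 3) (K + 1) n) +
      real (K + 2) / fact (K + 2) * (rsqrt n * scaled_term (K + 3) (K + 2) n) +
      real (K + 2) / fact (K + 3) * scaled_term (K + 3) (K + 3) n) =
      (\<Sum>j\<le>k. real (down_paths j (hook (k - 1))) * (real ((n - k) choose j) * tel_quot (k + j) n))) at_top"
  proof (intro eventually_at_top_linorderI[of 1])
    fix n :: nat assume "1 \<le> n"
    then have "(\<Sum>j\<le>k. real (down_paths j (hook (k - 1))) * (real ((n - k) choose j) * tel_quot (k + j) n)) =
        (\<Sum>j\<le>k. c j * (rsqrt n ^ (k - j) * scaled_term k j n))"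
      by (intro sum.cong) (simp_all add: term_eq_scaled_term c_def)
    then show "(\<Sum>j<K. c j * (rsqrt n ^ (k - j) * scaled_term k j n)) +
      (real (K + 1) / fact K * (rsqrt n ^ 3 * scaled_term (K + 3) K n) +
      real (K + 2) / fact (K + 1) * (rsqrt n ^ 2 * scaled_term (K + 3) (K + 1) n) +
      real (K + 2) / fact (K + 2) * (rsqrt n * scaled_term (K + 3) (K + 2) n) +
      real (K + 2) / fact (K + 3) * scaled_term (K + 3) (K + 3) n) =
      (\<Sum>j\<le>k. real (down_paths j (hook (k - 1))) * (real ((n - k) choose j) * tel_quot (k + j) n))"
      unfolding split c_top by (simp add: k)
  qed
  have small: "sqrt_expansion (\<lambda>n. \<Sum>j<K. c j * (rsqrt n ^ (k - j) * scaled_term k j n)) 0 0 0 0"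
    using rsqrt_power_scaled_term_bigo by (intro sqrt_expansion_zero big_sum_in_bigo) (simp add: k)
  from sqrt_expansion_cong[OF sqrt_expansion_add[OF small top_terms_expansion] ev] show ?thesis
    by (rule sqrt_expansion_eq_coeffs) (simp_all add: k)
qed

lemma prob_entry_12_eq_sum:
  assumes "2 \<le> k" "2 * k \<le> n"
  shows "prob_entry_12 k n =
    (\<Sum>j\<le>k. real (down_paths j (hook (k - 1))) * (real ((n - k) choose j) * tel_quot (k + j) n))"
  unfolding prob_entry_12_def card_SYT card_SYT_entry_01_eq_sum[OF assms]
  by (simp add: tel_quot_def sum_divide_distrib diff_diff_add mult_ac)

theorem theorem4:
  fixes k :: nat
  assumes "k \<ge> 3"
  shows "(\<lambda>n. prob_entry_12 k n - (real (k - 1) / fact k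
            + (real k - 4) / (3 * fact (k - 3)) * (1 / real n powr (3/2))))
         \<in> O(\<lambda>n. 1 / real n ^ 2)"
proof -
  have "eventually (\<lambda>n. (\<Sum>j\<le>k. real (down_paths j (hook (k - 1))) * (real ((n - k) choose j) * tel_quot (k + j) n)) =
      prob_entry_12 k n) at_top"
    using assms by (intro eventually_at_top_linorderI[of "2 * k"]) (simp add: prob_entry_12_eq_sum)
  from sqrt_expansion_cong[OF hook_sum_expansion[OF assms] this]
  have "(\<lambda>n. prob_entry_12 k n - (real (k - 1) / fact k + (real k - 4) / (3 * fact (k - 3)) * rsqrt n ^ 3))
      \<in> O(\<lambda>n. rsqrt n ^ 4)"
    by (simp add: sqrt_expansion_def)
  moreover have "rsqrt n ^ 4 = 1 / real n ^ 2" for n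
    by (simp add: rsqrt_def power_divide eval_nat_numeral)
  moreover have "rsqrt n ^ 3 = 1 / real n powr (3 / 2)" if "0 < n" for n
  proof -
    have "real n powr (3 / 2) = real n powr 1 * real n powr (1 / 2)"
      by (subst powr_add[symmetric]) simp
    then show ?thesis
      using that by (simp add: rsqrt_def powr_half_sqrt power_divide eval_nat_numeral)
  qed
  ultimately show ?thesis
    by (subst (asm) landau_o.big.in_cong) (auto intro: eventually_at_top_linorderI[of 1])
qed

end
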